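(* If a complex number $\alpha$ can be computed by a radical computation tree and $K$ is the splitting field of an irreducible polynomial over $\mathbf{Q}$ having $\alpha$ as one of its roots, then $\mathrm{Gal}(K/\mathbf{Q})$ does not contain the symmetric group $S_n$ as a subgroup for any $n\ge 5$.
   Context: An algebraic computation tree is a rooted tree whose computation nodes compute a value as the sum, difference, product or quotient of integer constants and values computed at ancestor nodes, and whose decision nodes test whether a computed value is greater than zero and branch. A radical computation tree additionally allows computing the $k$-th root of a previously computed value ($k$ an integer parameter) and complex conjugation. A value is computed by the tree if it is computed at some node. *)

theory Defs
  imports "HOL-Algebra.Sym_Groups" "HOL-Computational_Algebra.Polynomial_Factorial"
begin

datatype arith_op = OpAdd | OpSub | OpMul | OpDiv

text \<open>An operand of a computation node: an integer constant, or the value computed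
  at the i-th ancestor computation node (counted from the root, starting at 0).\<close>
datatype operand = Cst int | Val nat

datatype rct =
    Stop
  | Arith arith_op operand operand rct
  | Root nat operand rct
  | Conjg operand rct
  | Decide operand rct rct

fun opnd_ok :: "complex list \<Rightarrow> operand \<Rightarrow> bool" where
  "opnd_ok vs (Cst c) = True"
| "opnd_ok vs (Val i) = (i < length vs)"

fun opnd_val :: "complex list \<Rightarrow> operand \<Rightarrow> complex" where
  "opnd_val vs (Cst c) = of_int c"
| "opnd_val vs (Val i) = vs ! i"

fun arith_val :: "arith_op \<Rightarrow> complex \<Rightarrow> complex \<Rightarrow> complex" where
  "arith_val OpAdd x y = x + y"
| "arith_val OpSub x y = x - y"
| "arith_val OpMul x y = x * y"
| "arith_val OpDiv x y = x / y"

text \<open>computes_at vs T x: running the (sub)tree T, where vs are the values computed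
  at the ancestor computation nodes, the value x is computed at some node of T.
  A k-th root node may compute any k-th root (k \<ge> 1) of its argument; a quotient
  node is only executable when the divisor is nonzero; a decision node tests whether
  the (complex) value is a positive real number.\<close>
inductive computes_at :: "complex list \<Rightarrow> rct \<Rightarrow> complex \<Rightarrow> bool" where
  arith_here: "\<lbrakk>opnd_ok vs a; opnd_ok vs b; op = OpDiv \<longrightarrow> opnd_val vs b \<noteq> 0\<rbrakk>
     \<Longrightarrow> computes_at vs (Arith op a b T) (arith_val op (opnd_val vs a) (opnd_val vs b))"
| arith_later: "\<lbrakk>opnd_ok vs a; opnd_ok vs b; op = OpDiv \<longrightarrow> opnd_val vs b \<noteq> 0;
     computes_at (vs @ [arith_val op (opnd_val vs a) (opnd_val vs b)]) T x\<rbrakk>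
     \<Longrightarrow> computes_at vs (Arith op a b T) x"
| root_here: "\<lbrakk>opnd_ok vs a; k \<ge> 1; y ^ k = opnd_val vs a\<rbrakk>
     \<Longrightarrow> computes_at vs (Root k a T) y"
| root_later: "\<lbrakk>opnd_ok vs a; k \<ge> 1; y ^ k = opnd_val vs a; computes_at (vs @ [y]) T x\<rbrakk>
     \<Longrightarrow> computes_at vs (Root k a T) x"
| conj_here: "opnd_ok vs a \<Longrightarrow> computes_at vs (Conjg a T) (cnj (opnd_val vs a))"
| conj_later: "\<lbrakk>opnd_ok vs a; computes_at (vs @ [cnj (opnd_val vs a)]) T x\<rbrakk>
     \<Longrightarrow> computes_at vs (Conjg a T) x"
| dec_pos: "\<lbrakk>opnd_ok vs a; Im (opnd_val vs a) = 0 \<and> Re (opnd_val vs a) > 0; computes_at vs T1 x\<rbrakk>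
     \<Longrightarrow> computes_at vs (Decide a T1 T2) x"
| dec_nonpos: "\<lbrakk>opnd_ok vs a; \<not> (Im (opnd_val vs a) = 0 \<and> Re (opnd_val vs a) > 0); computes_at vs T2 x\<rbrakk>
     \<Longrightarrow> computes_at vs (Decide a T1 T2) x"

definition radical_computable :: "complex \<Rightarrow> bool" where
  "radical_computable \<alpha> \<longleftrightarrow> (\<exists>T. computes_at [] T \<alpha>)"

inductive_set gen_subfield :: "complex set \<Rightarrow> complex set" for S where
  gen: "x \<in> S \<Longrightarrow> x \<in> gen_subfield S"
| zero: "0 \<in> gen_subfield S"
| one: "1 \<in> gen_subfield S"
| add: "x \<in> gen_subfield S \<Longrightarrow> y \<in> gen_subfield S \<Longrightarrow> x + y \<in> gen_subfield S"
| neg: "x \<in> gen_subfield S \<Longrightarrow> - x \<in> gen_subfield S"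
| mult: "x \<in> gen_subfield S \<Longrightarrow> y \<in> gen_subfield S \<Longrightarrow> x * y \<in> gen_subfield S"
| inv: "x \<in> gen_subfield S \<Longrightarrow> inverse x \<in> gen_subfield S"

definition splitting_field :: "rat poly \<Rightarrow> complex set" where
  "splitting_field p = gen_subfield {z. poly (map_poly of_rat p) z = 0}"

text \<open>Automorphisms of a subfield K of \<complex> fixing \<rat> pointwise; extended by the
  identity outside K so that they are uniquely represented.\<close>
definition gal_auts :: "complex set \<Rightarrow> (complex \<Rightarrow> complex) set" where
  "gal_auts K = {\<sigma>. bij_betw \<sigma> K K
      \<and> (\<forall>x\<in>K. \<forall>y\<in>K. \<sigma> (x + y) = \<sigma> x + \<sigma> y \<and> \<sigma> (x * y) = \<sigma> x * \<sigma> y)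
      \<and> (\<forall>q. \<sigma> (of_rat q) = of_rat q)
      \<and> (\<forall>x. x \<notin> K \<longrightarrow> \<sigma> x = x)}"

definition Gal :: "complex set \<Rightarrow> (complex \<Rightarrow> complex) monoid" where
  "Gal K = \<lparr>carrier = gal_auts K, mult = (\<circ>), one = id\<rparr>"

end

theory Submission
  imports Defs "HOL-Computational_Algebra.Fundamental_Theorem_Algebra"
begin

text \<open>Every value computed by a radical computation tree lies in a radical tower over \<open>\<rat>\<close>,
  i.e. a field obtained by successively adjoining elements some power of which lies in the
  field generated so far; computing conjugates is harmless because the tower can be built
  closed under conjugation. All exponents divide one number \<open>N\<close>, so after adjoining a
  primitive \<open>N\<close>-th root of unity \<open>\<zeta>\<close> every step is a Kummer extension. Embeddings of \<open>\<rat>(\<alpha>)\<close>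
  into \<open>\<complex>\<close> extend along the tower, hence every conjugate of \<open>\<alpha>\<close>, and so the whole splitting
  field \<open>K\<close> of \<open>p\<close>, lies in one radical tower. The subgroups \<open>H\<^sub>n\<close> of \<open>Gal(K/\<rat>)\<close> obtained by
  restricting automorphisms of the \<open>n\<close>-th tower field over \<open>K\<close> that fix the \<open>n\<close>-th tower field
  over \<open>\<rat>\<close> form a chain in which commutators of \<open>H\<^sub>n\<close> lie in \<open>H\<^sub>n\<^sub>+\<^sub>1\<close>, because the
  automorphisms of each step commute on the adjoined element. The chain ends in the trivial
  group, so \<open>Gal(K/\<rat>)\<close> is solvable, whereas \<open>S\<^sub>n\<close> is not for \<open>n \<ge> 5\<close>.\<close>

section \<open>Subfields of the complex numbers\<close>

definition csubfield :: "complex set \<Rightarrow> bool" where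
  "csubfield F \<longleftrightarrow> 0 \<in> F \<and> 1 \<in> F \<and> (\<forall>x\<in>F. \<forall>y\<in>F. x + y \<in> F \<and> x * y \<in> F)
     \<and> (\<forall>x\<in>F. - x \<in> F \<and> inverse x \<in> F)"

lemma csubfieldD:
  assumes "csubfield F"
  shows "0 \<in> F" "1 \<in> F" "x \<in> F \<Longrightarrow> y \<in> F \<Longrightarrow> x + y \<in> F"
    "x \<in> F \<Longrightarrow> y \<in> F \<Longrightarrow> x * y \<in> F" "x \<in> F \<Longrightarrow> - x \<in> F" "x \<in> F \<Longrightarrow> inverse x \<in> F"
  using assms unfolding csubfield_def by auto

lemma csubfield_diff: "csubfield F \<Longrightarrow> x \<in> F \<Longrightarrow> y \<in> F \<Longrightarrow> x - y \<in> F"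
  using csubfieldD[of F] by (metis diff_conv_add_uminus)

lemma csubfield_divide: "csubfield F \<Longrightarrow> x \<in> F \<Longrightarrow> y \<in> F \<Longrightarrow> x / y \<in> F"
  using csubfieldD[of F] by (metis divide_inverse)

lemma csubfield_power: "csubfield F \<Longrightarrow> x \<in> F \<Longrightarrow> x ^ n \<in> F"
  by (induction n) (auto intro: csubfieldD)

lemma csubfield_sum: "csubfield F \<Longrightarrow> (\<And>i. i \<in> A \<Longrightarrow> f i \<in> F) \<Longrightarrow> sum f A \<in> F"
  by (induction A rule: infinite_finite_induct) (auto intro: csubfieldD)

lemma csubfield_of_nat: "csubfield F \<Longrightarrow> of_nat n \<in> F"
  by (induction n) (auto intro: csubfieldD)

lemma csubfield_of_int:
  assumes "csubfield F" shows "of_int n \<in> F"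
proof (cases "n \<ge> 0")
  case True
  then show ?thesis using csubfield_of_nat[OF assms, of "nat n"] by simp
next
  case False
  then have "of_int n = - (of_nat (nat (- n)) :: complex)" by simp
  then show ?thesis using csubfield_of_nat[OF assms] csubfieldD(5)[OF assms] by metis
qed

lemma csubfield_of_rat:
  assumes "csubfield F" shows "of_rat q \<in> F"
proof -
  obtain a b where "q = Rat.Fract a b" "b \<noteq> 0" by (cases q) auto
  then have "of_rat q = (of_int a / of_int b :: complex)" by (simp add: of_rat_rat)
  then show ?thesis using csubfield_divide[OF assms] csubfield_of_int[OF assms] by metis
qed

lemma Rats_subset_csubfield: "csubfield F \<Longrightarrow> \<rat> \<subseteq> F"
  using csubfield_of_rat by (auto elim: Rats_cases)

lemma csubfield_Rats: "csubfield \<rat>"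
  unfolding csubfield_def by (auto intro: Rats_add Rats_mult Rats_minus_iff Rats_inverse)

lemma csubfield_gen_subfield: "csubfield (gen_subfield S)"
  unfolding csubfield_def by (auto intro: gen_subfield.intros)

lemma gen_subfield_least: "S \<subseteq> L \<Longrightarrow> csubfield L \<Longrightarrow> gen_subfield S \<subseteq> L"
proof
  fix x assume "x \<in> gen_subfield S" "S \<subseteq> L" "csubfield L"
  then show "x \<in> L" by (induction rule: gen_subfield.induct) (auto intro: csubfieldD)
qed

lemma gen_subfield_subset: "S \<subseteq> gen_subfield S"
  by (auto intro: gen_subfield.gen)

lemma gen_subfield_mono: "S \<subseteq> T \<Longrightarrow> gen_subfield S \<subseteq> gen_subfield T"
  by (meson csubfield_gen_subfield gen_subfield_least gen_subfield_subset order_trans)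

lemma gen_subfield_idem: "csubfield F \<Longrightarrow> gen_subfield F = F"
  by (simp add: gen_subfield_least gen_subfield_subset subset_antisym)

lemma gen_subfield_Un_gen_subfield: "gen_subfield (gen_subfield A \<union> B) = gen_subfield (A \<union> B)"
proof
  show "gen_subfield (gen_subfield A \<union> B) \<subseteq> gen_subfield (A \<union> B)"
    by (intro gen_subfield_least csubfield_gen_subfield)
       (meson Un_least Un_upper1 Un_upper2 gen_subfield_mono gen_subfield_subset order_trans)
  show "gen_subfield (A \<union> B) \<subseteq> gen_subfield (gen_subfield A \<union> B)"
    by (intro gen_subfield_mono) (use gen_subfield_subset in blast)
qed

lemma gen_subfield_empty_subset_Rats: "gen_subfield {} \<subseteq> \<rat>"
  by (intro gen_subfield_least csubfield_Rats) simp

section \<open>Field homomorphisms on subfields\<close>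

definition hom_on :: "complex set \<Rightarrow> (complex \<Rightarrow> complex) \<Rightarrow> bool" where
  "hom_on L f \<longleftrightarrow> (\<forall>x\<in>L. \<forall>y\<in>L. f (x + y) = f x + f y \<and> f (x * y) = f x * f y) \<and> f 1 = 1"

lemma hom_on_id: "hom_on L id"
  by (simp add: hom_on_def)

lemma hom_on_subset: "hom_on L f \<Longrightarrow> M \<subseteq> L \<Longrightarrow> hom_on M f"
  unfolding hom_on_def by blast

context
  fixes L f assumes L: "csubfield L" and f: "hom_on L f"
begin

lemma hom_add: "x \<in> L \<Longrightarrow> y \<in> L \<Longrightarrow> f (x + y) = f x + f y"
  using f unfolding hom_on_def by auto

lemma hom_mult: "x \<in> L \<Longrightarrow> y \<in> L \<Longrightarrow> f (x * y) = f x * f y"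
  using f unfolding hom_on_def by auto

lemma hom_one: "f 1 = 1"
  using f unfolding hom_on_def by auto

lemma hom_zero: "f 0 = 0"
  using hom_add[of 0 0] csubfieldD(1)[OF L] by simp

lemma hom_uminus: "x \<in> L \<Longrightarrow> f (- x) = - f x"
  using hom_add[of x "-x"] csubfieldD(5)[OF L] hom_zero by (simp add: eq_neg_iff_add_eq_0 add.commute)

lemma hom_diff: "x \<in> L \<Longrightarrow> y \<in> L \<Longrightarrow> f (x - y) = f x - f y"
  using hom_add[of x "-y"] hom_uminus[of y] csubfieldD(5)[OF L] by simp

lemma hom_inverse: "x \<in> L \<Longrightarrow> f (inverse x) = inverse (f x)"
proof (cases "x = 0")
  case False
  assume x: "x \<in> L"
  have "f x * f (inverse x) = 1"
    using hom_mult[OF x csubfieldD(6)[OF L x]] False hom_one by simp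
  then show ?thesis by (simp add: inverse_unique)
qed (simp add: hom_zero)

lemma hom_divide: "x \<in> L \<Longrightarrow> y \<in> L \<Longrightarrow> f (x / y) = f x / f y"
  using hom_mult[of x "inverse y"] hom_inverse[of y] csubfieldD(6)[OF L] by (simp add: divide_inverse)

lemma hom_nonzero: "x \<in> L \<Longrightarrow> x \<noteq> 0 \<Longrightarrow> f x \<noteq> 0"
  using hom_mult[of x "inverse x"] csubfieldD(6)[OF L] hom_one by fastforce

lemma hom_inj_on: "inj_on f L"
  using hom_nonzero[of "_ - _"] hom_diff csubfield_diff[OF L] by (fastforce simp: inj_on_def)

lemma hom_power: "x \<in> L \<Longrightarrow> f (x ^ n) = f x ^ n"
  by (induction n) (auto simp: hom_one hom_mult csubfield_power[OF L])

lemma hom_sum: "(\<And>i. i \<in> A \<Longrightarrow> g i \<in> L) \<Longrightarrow> f (sum g A) = (\<Sum>i\<in>A. f (g i))"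
  by (induction A rule: infinite_finite_induct) (auto simp: hom_zero hom_add csubfield_sum[OF L])

lemma hom_of_nat: "f (of_nat n) = of_nat n"
  by (induction n) (auto simp: hom_zero hom_one hom_add csubfield_of_nat[OF L] csubfieldD[OF L])

lemma hom_of_int: "f (of_int n) = of_int n"
proof (cases "n \<ge> 0")
  case True then show ?thesis using hom_of_nat[of "nat n"] by simp
next
  case False
  then have "of_int n = - (of_nat (nat (- n)) :: complex)" by simp
  then show ?thesis using hom_uminus csubfield_of_nat[OF L] hom_of_nat by metis
qed

lemma hom_of_rat: "f (of_rat q) = of_rat q"
proof -
  obtain a b where "q = Rat.Fract a b" "b \<noteq> 0" by (cases q) auto
  then have "of_rat q = (of_int a / of_int b :: complex)" by (simp add: of_rat_rat)
  then show ?thesis using hom_divide csubfield_of_int[OF L] hom_of_int by metis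
qed

lemma hom_poly_of_rat:
  assumes "x \<in> L" shows "f (poly (map_poly of_rat P) x) = poly (map_poly of_rat P) (f x)"
proof (induction P)
  case (pCons a P)
  have "poly (map_poly of_rat P) x \<in> L"
    unfolding poly_altdef using assms
    by (auto simp: coeff_map_poly intro!: csubfield_sum[OF L] csubfieldD(4)[OF L]
        csubfield_power[OF L] csubfield_of_rat[OF L])
  then show ?case
    using pCons assms csubfield_of_rat[OF L]
    by (simp add: map_poly_pCons hom_add hom_mult csubfieldD[OF L] hom_of_rat split: if_splits)
qed (simp add: hom_zero)

lemma csubfield_image:
  assumes M: "csubfield M" and "M \<subseteq> L" shows "csubfield (f ` M)"
  unfolding csubfield_def
proof (intro conjI ballI)
  have M_sub: "x \<in> M \<Longrightarrow> x \<in> L" for x using assms(2) by blast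
  show "0 \<in> f ` M" "1 \<in> f ` M"
    using csubfieldD(1,2)[OF M] hom_zero hom_one by (metis image_eqI)+
  fix x y assume "x \<in> f ` M" "y \<in> f ` M"
  then obtain u v where uv: "u \<in> M" "v \<in> M" "x = f u" "y = f v" by blast
  show "x + y \<in> f ` M" "x * y \<in> f ` M" "- x \<in> f ` M" "inverse x \<in> f ` M"
    using uv M_sub[OF uv(1)] M_sub[OF uv(2)] csubfieldD[OF M] hom_add hom_mult hom_uminus hom_inverse
    by (metis image_eqI)+
qed

lemma hom_image_gen_subfield:
  assumes "gen_subfield S \<subseteq> L"
  shows "f ` gen_subfield S = gen_subfield (f ` S)"
proof
  have "f x \<in> gen_subfield (f ` S)" if "x \<in> gen_subfield S" for x
    using that
  proof (induction rule: gen_subfield.induct)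
    case (add x y) then show ?case
      using assms by (subst hom_add) (auto intro: gen_subfield.add)
  next
    case (neg x) then show ?case
      using assms by (subst hom_uminus) (auto intro: gen_subfield.neg)
  next
    case (mult x y) then show ?case
      using assms by (subst hom_mult) (auto intro: gen_subfield.mult)
  next
    case (inv x) then show ?case
      using assms by (subst hom_inverse) (auto intro: gen_subfield.inv)
  qed (auto simp: hom_zero hom_one intro: gen_subfield.intros)
  then show "f ` gen_subfield S \<subseteq> gen_subfield (f ` S)" by blast
next
  have "csubfield (f ` gen_subfield S)"
    using csubfield_image[OF csubfield_gen_subfield assms] .
  then show "gen_subfield (f ` S) \<subseteq> f ` gen_subfield S"
    by (intro gen_subfield_least) (use gen_subfield_subset in blast)
qed

end

lemma hom_eq_on_gen_subfield:
  assumes L: "csubfield L" and f: "hom_on L f" and g: "hom_on L g" and S: "gen_subfield S \<subseteq> L"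
    and eq: "\<And>x. x \<in> S \<Longrightarrow> f x = g x" and x: "x \<in> gen_subfield S"
  shows "f x = g x"
  using x
proof (induction rule: gen_subfield.induct)
  case (add x y) then show ?case using S hom_add[OF L f] hom_add[OF L g] by (auto simp: subset_iff)
next
  case (neg x) then show ?case using S hom_uminus[OF L f] hom_uminus[OF L g] by (auto simp: subset_iff)
next
  case (mult x y) then show ?case using S hom_mult[OF L f] hom_mult[OF L g] by (auto simp: subset_iff)
next
  case (inv x) then show ?case using S hom_inverse[OF L f] hom_inverse[OF L g] by (auto simp: subset_iff)
qed (use eq hom_zero[OF L f] hom_zero[OF L g] hom_one[OF L f] hom_one[OF L g] in auto)

section \<open>Polynomials with coefficients in a subfield\<close>

definition poly_over :: "complex set \<Rightarrow> complex poly \<Rightarrow> bool" where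
  "poly_over F p \<longleftrightarrow> (\<forall>i. coeff p i \<in> F)"

definition is_minpoly :: "complex set \<Rightarrow> complex \<Rightarrow> complex poly \<Rightarrow> bool" where
  "is_minpoly F \<beta> m \<longleftrightarrow> poly_over F m \<and> m \<noteq> 0 \<and> poly m \<beta> = 0 \<and>
     (\<forall>g. poly_over F g \<and> g \<noteq> 0 \<and> poly g \<beta> = 0 \<longrightarrow> degree m \<le> degree g)"

context fixes F assumes F: "csubfield F"
begin

lemma poly_over_0: "poly_over F 0"
  using csubfieldD(1)[OF F] by (simp add: poly_over_def)

lemma poly_over_const: "c \<in> F \<Longrightarrow> poly_over F [:c:]"
  using csubfieldD(1)[OF F] by (simp add: poly_over_def coeff_pCons split: nat.split)

lemma poly_over_1: "poly_over F 1"
  using poly_over_const[OF csubfieldD(2)[OF F]] by (simp add: one_pCons)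

lemma poly_over_X: "poly_over F [:0, 1:]"
  using csubfieldD(1,2)[OF F] by (simp add: poly_over_def coeff_pCons split: nat.split)

lemma poly_over_monom: "c \<in> F \<Longrightarrow> poly_over F (monom c n)"
  using csubfieldD(1)[OF F] by (simp add: poly_over_def coeff_monom)

lemma poly_over_add: "poly_over F p \<Longrightarrow> poly_over F q \<Longrightarrow> poly_over F (p + q)"
  using csubfieldD(3)[OF F] by (simp add: poly_over_def)

lemma poly_over_uminus: "poly_over F p \<Longrightarrow> poly_over F (- p)"
  using csubfieldD(5)[OF F] by (simp add: poly_over_def)

lemma poly_over_diff: "poly_over F p \<Longrightarrow> poly_over F q \<Longrightarrow> poly_over F (p - q)"
  using csubfield_diff[OF F] by (simp add: poly_over_def)

lemma poly_over_mult: "poly_over F p \<Longrightarrow> poly_over F q \<Longrightarrow> poly_over F (p * q)"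
  unfolding poly_over_def coeff_mult
  by (auto intro!: csubfield_sum[OF F] csubfieldD(4)[OF F])

lemma poly_over_smult: "c \<in> F \<Longrightarrow> poly_over F p \<Longrightarrow> poly_over F (smult c p)"
  using csubfieldD(4)[OF F] by (simp add: poly_over_def)

lemma poly_over_cancel_lead_coeff:
  assumes g: "poly_over F g" "g \<noteq> 0" and d: "poly_over F d" "d \<noteq> 0" and dg: "degree d \<le> degree g"
  obtains t where "poly_over F t" "g - t * d = 0 \<or> degree (g - t * d) < degree g"
proof -
  define c where "c = lead_coeff g / lead_coeff d"
  define t where "t = monom c (degree g - degree d)"
  have "c \<in> F" unfolding c_def using g d by (auto intro!: csubfield_divide[OF F] simp: poly_over_def)
  then have t: "poly_over F t" unfolding t_def by (rule poly_over_monom)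
  have "coeff (g - t * d) i = 0" if "i \<ge> degree g" for i
  proof (cases "i = degree g")
    case True
    have "coeff (t * d) i = c * lead_coeff d" unfolding t_def using True dg by (simp add: coeff_monom_mult)
    then show ?thesis unfolding c_def using True d(2) by simp
  next
    case False
    then have i: "i > degree g" using that by simp
    then have "coeff d (i - (degree g - degree d)) = 0" using dg by (intro coeff_eq_0) linarith
    then show ?thesis unfolding t_def using i dg by (simp add: coeff_eq_0 coeff_monom_mult)
  qed
  then have "g - t * d = 0 \<or> degree (g - t * d) < degree g"
    by (metis leading_coeff_0_iff not_le_imp_less)
  then show ?thesis using t that by blast
qed

lemma poly_over_division:
  assumes d: "poly_over F d" "d \<noteq> 0" and g: "poly_over F g"
  obtains q r where "poly_over F q" "poly_over F r" "g = q * d + r" "r = 0 \<or> degree r < degree d"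
proof -
  have "\<exists>q r. poly_over F q \<and> poly_over F r \<and> g = q * d + r \<and> (r = 0 \<or> degree r < degree d)"
    using g
  proof (induction "degree g" arbitrary: g rule: less_induct)
    case less
    show ?case
    proof (cases "g = 0 \<or> degree g < degree d")
      case True
      then show ?thesis using less.prems poly_over_0 by (intro exI[of _ 0] exI[of _ g]) auto
    next
      case False
      then obtain t where t: "poly_over F t" "g - t * d = 0 \<or> degree (g - t * d) < degree g"
        using poly_over_cancel_lead_coeff[OF less.prems _ d] by auto
      have "poly_over F (g - t * d)" using t(1) d(1) less.prems by (intro poly_over_diff poly_over_mult)
      moreover have "\<exists>q r. poly_over F q \<and> poly_over F r \<and> g - t * d = q * d + r
          \<and> (r = 0 \<or> degree r < degree d)" if "g - t * d = 0"
        using that poly_over_0 by (intro exI[of _ 0]) auto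
      ultimately obtain q r where qr: "poly_over F q" "poly_over F r" "g - t * d = q * d + r"
        "r = 0 \<or> degree r < degree d"
        using t(2) less.hyps[of "g - t * d"] by blast
      then have "g = (q + t) * d + r" by (simp add: algebra_simps)
      then show ?thesis using qr poly_over_add[OF qr(1) t(1)] by blast
    qed
  qed
  then show ?thesis using that by blast
qed

lemma is_minpoly_exists:
  assumes "poly_over F g" "g \<noteq> 0" "poly g \<beta> = 0"
  shows "\<exists>m. is_minpoly F \<beta> m"
proof -
  obtain m where "poly_over F m \<and> m \<noteq> 0 \<and> poly m \<beta> = 0"
    and "\<And>g. poly_over F g \<and> g \<noteq> 0 \<and> poly g \<beta> = 0 \<Longrightarrow> degree m \<le> degree g"
    using ex_has_least_nat[of "\<lambda>g. poly_over F g \<and> g \<noteq> 0 \<and> poly g \<beta> = 0" g degree] assms by blast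
  then show ?thesis unfolding is_minpoly_def by blast
qed

lemma is_minpoly_dvd:
  assumes m: "is_minpoly F \<beta> m" and h: "poly_over F h" "poly h \<beta> = 0"
  shows "\<exists>q. poly_over F q \<and> h = q * m"
proof -
  have "poly_over F m" "m \<noteq> 0" using m unfolding is_minpoly_def by auto
  then obtain q r where qr: "poly_over F q" "poly_over F r" "h = q * m + r" "r = 0 \<or> degree r < degree m"
    using poly_over_division h(1) by blast
  have "poly r \<beta> = 0" using qr(3) h(2) m unfolding is_minpoly_def by simp
  then have "r = 0" using qr(2,4) m unfolding is_minpoly_def by (meson not_le)
  then show ?thesis using qr by auto
qed

lemma is_minpoly_degree: "is_minpoly F \<beta> m \<Longrightarrow> degree m > 0"
proof (rule ccontr)
  assume m: "is_minpoly F \<beta> m" and "\<not> degree m > 0"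
  then obtain c where "m = [:c:]" by (metis degree_eq_zeroE gr0I)
  then show False using m unfolding is_minpoly_def by simp
qed

lemma poly_over_min_combination_dvd:
  assumes ab: "poly_over F a" "poly_over F b" "a * m + b * h \<noteq> 0"
    and min: "\<And>a' b'. poly_over F a' \<Longrightarrow> poly_over F b' \<Longrightarrow> a' * m + b' * h \<noteq> 0
       \<Longrightarrow> degree (a * m + b * h) \<le> degree (a' * m + b' * h)"
    and mh: "poly_over F m" "poly_over F h" and ab': "poly_over F a'" "poly_over F b'"
  obtains q where "poly_over F q" "a' * m + b' * h = q * (a * m + b * h)"
proof -
  let ?d = "a * m + b * h"
  have "poly_over F ?d" "poly_over F (a' * m + b' * h)"
    using ab ab' mh by (auto intro: poly_over_add poly_over_mult)
  then obtain q r where qr: "poly_over F q" "poly_over F r" "a' * m + b' * h = q * ?d + r"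
    "r = 0 \<or> degree r < degree ?d"
    using poly_over_division ab(3) by blast
  have "r = (a' - q * a) * m + (b' - q * b) * h" using qr(3) by (simp add: algebra_simps)
  moreover have "poly_over F (a' - q * a)" "poly_over F (b' - q * b)"
    using ab ab' qr(1) by (auto intro!: poly_over_diff poly_over_mult)
  ultimately have "r = 0" using min qr(4) by (metis not_le)
  then show ?thesis using qr that by simp
qed

text \<open>The nonzero combination \<open>d = a m + b h\<close> of least degree divides \<open>m\<close> and \<open>h\<close>; as
  \<open>h(\<beta>) \<noteq> 0\<close>, the cofactor of \<open>m\<close> vanishes at \<open>\<beta>\<close>, so minimality of \<open>m\<close> makes \<open>d\<close>
  constant and \<open>b(\<beta>)/d\<close> inverts \<open>h(\<beta>)\<close>.\<close>

lemma poly_over_inverse: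
  assumes m: "is_minpoly F \<beta> m" and h: "poly_over F h" "poly h \<beta> \<noteq> 0"
  obtains b where "poly_over F b" "poly b \<beta> * poly h \<beta> = 1"
proof -
  have mF: "poly_over F m" and m\<beta>: "poly m \<beta> = 0" and m0: "m \<noteq> 0"
    using m unfolding is_minpoly_def by auto
  let ?P = "\<lambda>(a, b). poly_over F a \<and> poly_over F b \<and> a * m + b * h \<noteq> 0"
  let ?deg = "\<lambda>(a, b). degree (a * m + b * h)"
  have "?P (0, 1)" using h poly_over_0 poly_over_1 by auto
  then obtain ab where ab: "?P ab" and min: "\<And>y. ?P y \<Longrightarrow> ?deg ab \<le> ?deg y"
    using ex_has_least_nat[of ?P "(0, 1)" ?deg] by blast
  obtain a b where ab_eq: "ab = (a, b)" by (cases ab)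
  let ?d = "a * m + b * h"
  have a: "poly_over F a" and b: "poly_over F b" and d0: "?d \<noteq> 0" using ab ab_eq by auto
  have min': "degree ?d \<le> degree (a' * m + b' * h)"
    if "poly_over F a'" "poly_over F b'" "a' * m + b' * h \<noteq> 0" for a' b'
    using min[of "(a', b')"] that ab_eq by simp
  have dvd: "\<exists>q. poly_over F q \<and> a' * m + b' * h = q * ?d" if "poly_over F a'" "poly_over F b'" for a' b'
    using poly_over_min_combination_dvd[OF a b d0 min' mF h(1) that] by blast
  obtain q where q: "poly_over F q" "m = q * ?d" using dvd[OF poly_over_1 poly_over_0] by auto
  obtain q' where "h = q' * ?d" using dvd[OF poly_over_0 poly_over_1] by auto
  then have d\<beta>: "poly ?d \<beta> \<noteq> 0" using h(2) by (metis mult_zero_right poly_mult)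
  have q0: "q \<noteq> 0" using q(2) m0 by (metis mult_zero_left)
  moreover have "poly q \<beta> = 0" using q(2) m\<beta> d\<beta> by (metis no_zero_divisors poly_mult)
  ultimately have "degree m \<le> degree q" using m q(1) unfolding is_minpoly_def by blast
  moreover have "degree (q * ?d) = degree q + degree ?d" using q0 d0 by (rule degree_mult_eq)
  ultimately have "degree ?d = 0" using q(2) by simp
  then obtain c where c: "?d = [:c:]" by (rule degree_eq_zeroE)
  have "poly_over F ?d" using a b mF h(1) by (intro poly_over_add poly_over_mult)
  then have "coeff ?d 0 \<in> F" unfolding poly_over_def by blast
  then have cF: "c \<in> F" using c by simp
  have c0: "c \<noteq> 0" using c d0 by auto
  have "poly ?d \<beta> = poly b \<beta> * poly h \<beta>" using m\<beta> by simp
  then have "poly (smult (inverse c) b) \<beta> * poly h \<beta> = 1" using c c0 by (simp add: field_simps)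
  then show ?thesis using that poly_over_smult[OF csubfieldD(6)[OF F cF] b] by blast
qed

lemma poly_mem_csubfield:
  assumes "csubfield L" "poly_over F h" "F \<subseteq> L" "x \<in> L" shows "poly h x \<in> L"
  using assms unfolding poly_altdef poly_over_def
  by (auto intro!: csubfield_sum csubfieldD(4) csubfield_power)

lemma csubfield_poly_values:
  assumes m: "is_minpoly F \<beta> m" shows "csubfield {poly h \<beta> | h. poly_over F h}" (is "csubfield ?A")
  unfolding csubfield_def
proof (intro conjI ballI)
  show "0 \<in> ?A" using poly_over_0 poly_0 by (metis (mono_tags, lifting) mem_Collect_eq)
  show "1 \<in> ?A" using poly_over_1 poly_1 by (metis (mono_tags, lifting) mem_Collect_eq)
  fix x y assume "x \<in> ?A" "y \<in> ?A"
  then obtain h1 h2 where h: "poly_over F h1" "poly_over F h2" "x = poly h1 \<beta>" "y = poly h2 \<beta>"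
    by blast
  have "x + y = poly (h1 + h2) \<beta>" "poly_over F (h1 + h2)" using h by (simp_all add: poly_over_add)
  then show "x + y \<in> ?A" by blast
  have "x * y = poly (h1 * h2) \<beta>" "poly_over F (h1 * h2)" using h by (simp_all add: poly_over_mult)
  then show "x * y \<in> ?A" by blast
next
  fix x assume "x \<in> ?A"
  then obtain h where h: "poly_over F h" "x = poly h \<beta>" by blast
  then have "- x = poly (- h) \<beta>" "poly_over F (- h)" by (simp_all add: poly_over_uminus)
  then show "- x \<in> ?A" by blast
  show "inverse x \<in> ?A"
  proof (cases "x = 0")
    case False
    then have "poly h \<beta> \<noteq> 0" using h(2) by simp
    then obtain b where "poly_over F b" "poly b \<beta> * poly h \<beta> = 1"
      by (rule poly_over_inverse[OF m h(1)])
    then have "inverse x = poly b \<beta>" using h by (metis inverse_unique mult.commute)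
    then show ?thesis using \<open>poly_over F b\<close> by blast
  next
    case True
    then have "inverse x = poly 0 \<beta>" by simp
    then show ?thesis using poly_over_0 by blast
  qed
qed

lemma gen_subfield_insert_algebraic:
  assumes "poly_over F g" "g \<noteq> 0" "poly g \<beta> = 0"
  shows "gen_subfield (F \<union> {\<beta>}) = {poly h \<beta> | h. poly_over F h}" (is "_ = ?A")
proof
  have "x \<in> ?A" if "x \<in> F" for x
    using poly_over_const[OF that] by (metis (mono_tags, lifting) mem_Collect_eq poly_const_conv)
  moreover have "\<beta> = poly [:0, 1:] \<beta>" by simp
  then have "\<beta> \<in> ?A" using poly_over_X by blast
  moreover obtain m where "is_minpoly F \<beta> m" using is_minpoly_exists[OF assms] by blast
  ultimately show "gen_subfield (F \<union> {\<beta>}) \<subseteq> ?A"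
    using csubfield_poly_values by (intro gen_subfield_least) auto
next
  show "?A \<subseteq> gen_subfield (F \<union> {\<beta>})"
  proof safe
    fix h assume "poly_over F h"
    then show "poly h \<beta> \<in> gen_subfield (F \<union> {\<beta>})"
      by (rule poly_mem_csubfield[OF csubfield_gen_subfield]) (auto intro: gen_subfield.gen)
  qed
qed

end

section \<open>Extending embeddings\<close>

context fixes F \<sigma> assumes F: "csubfield F" and \<sigma>: "hom_on F \<sigma>"
begin

lemma coeff_map_hom: "coeff (map_poly \<sigma> p) i = \<sigma> (coeff p i)"
  by (simp add: coeff_map_poly hom_zero[OF F \<sigma>])

lemma map_hom_add: "poly_over F p \<Longrightarrow> poly_over F q \<Longrightarrow> map_poly \<sigma> (p + q) = map_poly \<sigma> p + map_poly \<sigma> q"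
  by (rule poly_eqI) (simp add: coeff_map_hom hom_add[OF F \<sigma>] poly_over_def)

lemma map_hom_diff: "poly_over F p \<Longrightarrow> poly_over F q \<Longrightarrow> map_poly \<sigma> (p - q) = map_poly \<sigma> p - map_poly \<sigma> q"
  by (rule poly_eqI) (simp add: coeff_map_hom hom_diff[OF F \<sigma>] poly_over_def)

lemma map_hom_mult: "poly_over F p \<Longrightarrow> poly_over F q \<Longrightarrow> map_poly \<sigma> (p * q) = map_poly \<sigma> p * map_poly \<sigma> q"
proof (rule poly_eqI)
  fix n assume p: "poly_over F p" and q: "poly_over F q"
  have "\<sigma> (\<Sum>i\<le>n. coeff p i * coeff q (n - i)) = (\<Sum>i\<le>n. \<sigma> (coeff p i * coeff q (n - i)))"
    using p q by (intro hom_sum[OF F \<sigma>]) (auto simp: poly_over_def intro!: csubfieldD(4)[OF F])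
  also have "\<dots> = (\<Sum>i\<le>n. \<sigma> (coeff p i) * \<sigma> (coeff q (n - i)))"
    using p q by (intro sum.cong refl hom_mult[OF F \<sigma>]) (auto simp: poly_over_def)
  finally show "coeff (map_poly \<sigma> (p * q)) n = coeff (map_poly \<sigma> p * map_poly \<sigma> q) n"
    by (simp add: coeff_map_hom coeff_mult)
qed

lemma map_hom_const: "c \<in> F \<Longrightarrow> map_poly \<sigma> [:c:] = [:\<sigma> c:]"
  by (rule poly_eqI) (simp add: coeff_map_hom coeff_pCons hom_zero[OF F \<sigma>] split: nat.split)

lemma map_hom_X: "map_poly \<sigma> [:0, 1:] = [:0, 1:]"
  by (rule poly_eqI) (simp add: coeff_map_hom coeff_pCons hom_zero[OF F \<sigma>] hom_one[OF F \<sigma>] split: nat.split)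

lemma map_hom_1: "map_poly \<sigma> 1 = 1"
  using map_hom_const[OF csubfieldD(2)[OF F]] by (simp add: hom_one[OF F \<sigma>] one_pCons)

lemma degree_map_hom: "poly_over F p \<Longrightarrow> degree (map_poly \<sigma> p) = degree p"
proof (cases "p = 0")
  case False
  assume "poly_over F p"
  then have "\<sigma> (lead_coeff p) \<noteq> 0" using False hom_nonzero[OF F \<sigma>] by (simp add: poly_over_def)
  then have "coeff (map_poly \<sigma> p) (degree p) \<noteq> 0" by (simp add: coeff_map_hom)
  then show ?thesis by (meson antisym le_degree map_poly_degree_leq)
qed simp

lemma poly_eval_map_well_defined:
  assumes cond: "\<And>h. poly_over F h \<Longrightarrow> poly h \<beta> = 0 \<Longrightarrow> poly (map_poly \<sigma> h) \<beta>' = 0"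
  obtains \<tau> where "\<And>h. poly_over F h \<Longrightarrow> \<tau> (poly h \<beta>) = poly (map_poly \<sigma> h) \<beta>'"
proof
  define rep where "rep x = (SOME h. poly_over F h \<and> poly h \<beta> = x)" for x
  fix h assume h: "poly_over F h"
  then have "\<exists>h'. poly_over F h' \<and> poly h' \<beta> = poly h \<beta>" by blast
  then have "poly_over F (rep (poly h \<beta>)) \<and> poly (rep (poly h \<beta>)) \<beta> = poly h \<beta>"
    unfolding rep_def by (rule someI_ex)
  then have "poly (map_poly \<sigma> (rep (poly h \<beta>) - h)) \<beta>' = 0"
    using cond[of "rep (poly h \<beta>) - h"] poly_over_diff[OF F _ h] by simp
  then show "poly (map_poly \<sigma> (rep (poly h \<beta>))) \<beta>' = poly (map_poly \<sigma> h) \<beta>'"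
    using map_hom_diff h \<open>poly_over F (rep (poly h \<beta>)) \<and> _\<close> by simp
qed

lemma hom_extend_adjoin:
  assumes g: "poly_over F g" "g \<noteq> 0" "poly g \<beta> = 0"
    and cond: "\<And>h. poly_over F h \<Longrightarrow> poly h \<beta> = 0 \<Longrightarrow> poly (map_poly \<sigma> h) \<beta>' = 0"
  shows "\<exists>\<tau>. hom_on (gen_subfield (F \<union> {\<beta>})) \<tau> \<and> (\<forall>x\<in>F. \<tau> x = \<sigma> x) \<and> \<tau> \<beta> = \<beta>'"
proof -
  obtain \<tau> where ev: "\<And>h. poly_over F h \<Longrightarrow> \<tau> (poly h \<beta>) = poly (map_poly \<sigma> h) \<beta>'"
    using poly_eval_map_well_defined[OF cond] by blast
  have mem: "x \<in> gen_subfield (F \<union> {\<beta>}) \<Longrightarrow> \<exists>h. poly_over F h \<and> x = poly h \<beta>" for x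
    unfolding gen_subfield_insert_algebraic[OF F g] by blast
  have "hom_on (gen_subfield (F \<union> {\<beta>})) \<tau>"
    unfolding hom_on_def
  proof (intro conjI ballI)
    fix x y assume "x \<in> gen_subfield (F \<union> {\<beta>})" "y \<in> gen_subfield (F \<union> {\<beta>})"
    then obtain h1 h2 where h: "poly_over F h1" "x = poly h1 \<beta>" "poly_over F h2" "y = poly h2 \<beta>"
      using mem by blast
    have "\<tau> (x + y) = \<tau> (poly (h1 + h2) \<beta>)" using h by simp
    also have "\<dots> = poly (map_poly \<sigma> (h1 + h2)) \<beta>'" using ev poly_over_add[OF F h(1,3)] by blast
    also have "\<dots> = \<tau> x + \<tau> y" using h ev map_hom_add[OF h(1,3)] by simp
    finally show "\<tau> (x + y) = \<tau> x + \<tau> y" .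
    have "\<tau> (x * y) = \<tau> (poly (h1 * h2) \<beta>)" using h by simp
    also have "\<dots> = poly (map_poly \<sigma> (h1 * h2)) \<beta>'" using ev poly_over_mult[OF F h(1,3)] by blast
    also have "\<dots> = \<tau> x * \<tau> y" using h ev map_hom_mult[OF h(1,3)] by simp
    finally show "\<tau> (x * y) = \<tau> x * \<tau> y" .
  next
    show "\<tau> 1 = 1" using ev[OF poly_over_1[OF F]] map_hom_1 by simp
  qed
  moreover have "\<tau> x = \<sigma> x" if "x \<in> F" for x
    using ev[OF poly_over_const[OF F that]] map_hom_const[OF that] by simp
  moreover have "\<tau> \<beta> = \<beta>'" using ev[OF poly_over_X[OF F]] map_hom_X by simp
  ultimately show ?thesis by blast
qed

lemma hom_extend_algebraic:
  assumes g: "poly_over F g" "g \<noteq> 0" "poly g \<beta> = 0"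
  shows "\<exists>\<tau>. hom_on (gen_subfield (F \<union> {\<beta>})) \<tau> \<and> (\<forall>x\<in>F. \<tau> x = \<sigma> x)"
proof -
  obtain m where m: "is_minpoly F \<beta> m" using is_minpoly_exists[OF F g] by blast
  have mF: "poly_over F m" using m unfolding is_minpoly_def by blast
  have "degree (map_poly \<sigma> m) > 0" using degree_map_hom[OF mF] is_minpoly_degree[OF F m] by simp
  then obtain \<beta>' where \<beta>': "poly (map_poly \<sigma> m) \<beta>' = 0"
    using fundamental_theorem_of_algebra constant_degree by (metis neq0_conv)
  have cond: "poly (map_poly \<sigma> h) \<beta>' = 0" if hh: "poly_over F h" "poly h \<beta> = 0" for h
  proof -
    obtain q where q: "poly_over F q" "h = q * m" using is_minpoly_dvd[OF F m hh] by blast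
    then show ?thesis using map_hom_mult[OF q(1) mF] \<beta>' by simp
  qed
  show ?thesis using hom_extend_adjoin[OF g cond] by blast
qed

end


section \<open>Radical towers\<close>

definition radical_seq :: "complex set \<Rightarrow> complex list \<Rightarrow> bool" where
  "radical_seq F ys \<longleftrightarrow>
     (\<forall>j<length ys. \<exists>k\<ge>1. (ys ! j) ^ k \<in> gen_subfield (F \<union> set (take j ys)))"

definition radical_tower :: "nat \<Rightarrow> complex list \<Rightarrow> bool" where
  "radical_tower N ys \<longleftrightarrow>
     (\<forall>j<length ys. \<exists>k\<ge>1. k dvd N \<and> (ys ! j) ^ k \<in> gen_subfield (set (take j ys)))"

lemma radical_seq_Nil: "radical_seq F []"
  by (simp add: radical_seq_def)

lemma radical_seq_snoc:
  "radical_seq F (ys @ [y]) \<longleftrightarrow> radical_seq F ys \<and> (\<exists>k\<ge>1. y ^ k \<in> gen_subfield (F \<union> set ys))"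
  unfolding radical_seq_def by (auto simp: nth_append less_Suc_eq)

lemma radical_tower_imp_radical_seq:
  assumes "radical_tower N ys" shows "radical_seq F ys"
  unfolding radical_seq_def
proof (intro allI impI)
  fix j assume "j < length ys"
  then obtain k where "k \<ge> 1" "(ys ! j) ^ k \<in> gen_subfield (set (take j ys))"
    using assms unfolding radical_tower_def by blast
  moreover have "gen_subfield (set (take j ys)) \<subseteq> gen_subfield (F \<union> set (take j ys))"
    by (rule gen_subfield_mono) blast
  ultimately show "\<exists>k\<ge>1. (ys ! j) ^ k \<in> gen_subfield (F \<union> set (take j ys))" by blast
qed

lemma radical_seq_imp_radical_tower:
  "radical_seq {} ys \<Longrightarrow> \<exists>N>0. radical_tower N ys"
proof (induction ys rule: rev_induct)
  case Nil then show ?case by (auto simp: radical_tower_def)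
next
  case (snoc y ys)
  then obtain N where N: "N > 0" "radical_tower N ys" by (auto simp: radical_seq_snoc)
  obtain k where k: "k \<ge> 1" "y ^ k \<in> gen_subfield (set ys)"
    using snoc.prems by (auto simp: radical_seq_snoc)
  have "radical_tower (N * k) (ys @ [y])"
    using N(2) k unfolding radical_tower_def
    by (auto simp: nth_append less_Suc_eq intro: dvd_mult2)
  then show ?case using N k by (intro exI[of _ "N * k"]) simp
qed

lemma radical_tower_append:
  assumes xs: "radical_tower N xs" and ys: "radical_tower N ys"
  shows "radical_tower N (xs @ ys)"
  unfolding radical_tower_def
proof (intro allI impI)
  fix j assume j: "j < length (xs @ ys)"
  show "\<exists>k\<ge>1. k dvd N \<and> ((xs @ ys) ! j) ^ k \<in> gen_subfield (set (take j (xs @ ys)))"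
  proof (cases "j < length xs")
    case True then show ?thesis using xs by (auto simp: radical_tower_def nth_append)
  next
    case False
    then obtain k where k: "k \<ge> 1" "k dvd N"
      "(ys ! (j - length xs)) ^ k \<in> gen_subfield (set (take (j - length xs) ys))"
      using ys j unfolding radical_tower_def by (metis add_diff_inverse_nat length_append nat_add_left_cancel_less)
    have "gen_subfield (set (take (j - length xs) ys)) \<subseteq> gen_subfield (set (take j (xs @ ys)))"
      using False by (intro gen_subfield_mono) auto
    then show ?thesis using k False by (auto simp: nth_append)
  qed
qed

lemma radical_tower_map_hom:
  assumes L: "csubfield L" and f: "hom_on L f" and sub: "set zs \<subseteq> L" and t: "radical_tower N zs"
  shows "radical_tower N (map f zs)"
  unfolding radical_tower_def
proof (intro allI impI)
  fix j assume j: "j < length (map f zs)"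
  obtain k where k: "k \<ge> 1" "k dvd N" "(zs ! j) ^ k \<in> gen_subfield (set (take j zs))"
    using t j unfolding radical_tower_def by auto
  have G: "gen_subfield (set (take j zs)) \<subseteq> L"
    using sub by (intro gen_subfield_least L) (meson order.trans set_take_subset)
  have zj: "zs ! j \<in> L" using sub j by auto
  have "f ((zs ! j) ^ k) \<in> f ` gen_subfield (set (take j zs))" using k by blast
  also have "\<dots> = gen_subfield (f ` set (take j zs))" using hom_image_gen_subfield[OF L f G] .
  finally show "\<exists>k\<ge>1. k dvd N \<and> (map f zs ! j) ^ k \<in> gen_subfield (set (take j (map f zs)))"
    using k j hom_power[OF L f zj] by (auto simp: take_map)
qed

lemma hom_extend_radical_seq:
  assumes F: "csubfield F" and \<sigma>: "hom_on F \<sigma>" and zs: "radical_seq F zs"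
  shows "\<exists>\<tau>. hom_on (gen_subfield (F \<union> set zs)) \<tau> \<and> (\<forall>x\<in>F. \<tau> x = \<sigma> x)"
  using zs
proof (induction zs rule: rev_induct)
  case Nil
  then show ?case using gen_subfield_idem[OF F] \<sigma> by (intro exI[of _ \<sigma>]) auto
next
  case (snoc y ys)
  define F' where "F' = gen_subfield (F \<union> set ys)"
  have F': "csubfield F'" unfolding F'_def by (rule csubfield_gen_subfield)
  obtain \<tau> where \<tau>: "hom_on F' \<tau>" "\<forall>x\<in>F. \<tau> x = \<sigma> x"
    using snoc by (auto simp: radical_seq_snoc F'_def)
  obtain k where k: "k \<ge> 1" "y ^ k \<in> F'"
    using snoc.prems by (auto simp: radical_seq_snoc F'_def)
  define g where "g = monom 1 k - [:y ^ k:]"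
  have "poly_over F' g" unfolding g_def
    using k F' by (intro poly_over_diff poly_over_monom poly_over_const) (auto simp: csubfieldD)
  moreover have "coeff g k = 1" using k by (simp add: g_def coeff_pCons split: nat.split)
  then have "g \<noteq> 0" by auto
  moreover have "poly g y = 0" by (simp add: g_def poly_monom)
  ultimately obtain \<tau>' where \<tau>': "hom_on (gen_subfield (F' \<union> {y})) \<tau>'" "\<forall>x\<in>F'. \<tau>' x = \<tau> x"
    using hom_extend_algebraic[OF F' \<tau>(1)] by blast
  have "gen_subfield (F' \<union> {y}) = gen_subfield (F \<union> set (ys @ [y]))"
    unfolding F'_def gen_subfield_Un_gen_subfield by (simp add: Un_assoc)
  moreover have "\<forall>x\<in>F. \<tau>' x = \<sigma> x"
    using \<tau>'(2) \<tau>(2) gen_subfield_subset[of "F \<union> set ys"] by (auto simp: F'_def)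
  ultimately show ?case using \<tau>'(1) by auto
qed

section \<open>Values of radical computation trees\<close>

lemma opnd_val_mem:
  assumes "opnd_ok vs a" "set vs \<subseteq> gen_subfield S" "cnj ` set vs \<subseteq> gen_subfield S"
  shows "opnd_val vs a \<in> gen_subfield S" "cnj (opnd_val vs a) \<in> gen_subfield S"
  using assms csubfield_of_int[OF csubfield_gen_subfield] by (cases a; auto)+

lemma arith_val_mem:
  assumes "x \<in> gen_subfield S" "y \<in> gen_subfield S" "cnj x \<in> gen_subfield S" "cnj y \<in> gen_subfield S"
  shows "arith_val op x y \<in> gen_subfield S" "cnj (arith_val op x y) \<in> gen_subfield S"
  using assms csubfieldD[OF csubfield_gen_subfield[of S]] csubfield_diff[OF csubfield_gen_subfield]
    csubfield_divide[OF csubfield_gen_subfield]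
  by (cases op; auto)+

text \<open>The invariant carried through the tree is that all values computed so far, together with
  their complex conjugates, lie in the field generated by a radical sequence; a root node
  therefore appends both the root and its conjugate.\<close>

lemma computes_at_radical_seq:
  assumes "computes_at vs T x" "radical_seq {} ys"
    "set vs \<subseteq> gen_subfield (set ys)" "cnj ` set vs \<subseteq> gen_subfield (set ys)"
  shows "\<exists>zs. radical_seq {} (ys @ zs) \<and> x \<in> gen_subfield (set (ys @ zs))"
  using assms
proof (induction arbitrary: ys rule: computes_at.induct)
  case (arith_here vs a b op T)
  then show ?case using opnd_val_mem[of vs _ "set ys"] arith_val_mem by (intro exI[of _ "[]"]) auto
next
  case (arith_later vs a b op T x)
  then show ?case using opnd_val_mem[of vs _ "set ys"] arith_val_mem by auto
next
  case (root_here vs a k y T)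
  have "y ^ k \<in> gen_subfield (set ys)" using root_here opnd_val_mem by metis
  then have "radical_seq {} (ys @ [y])" using root_here by (auto simp: radical_seq_snoc)
  then show ?case by (intro exI[of _ "[y]"]) (auto intro: gen_subfield.gen)
next
  case (root_later vs a k y T x)
  have a: "opnd_val vs a \<in> gen_subfield (set ys)" "cnj (opnd_val vs a) \<in> gen_subfield (set ys)"
    using root_later opnd_val_mem by metis+
  have sub: "gen_subfield (set ys) \<subseteq> gen_subfield (set (ys @ [y]))"
    by (intro gen_subfield_mono) auto
  have "cnj y ^ k \<in> gen_subfield (set ys)" using a root_later by (metis complex_cnj_power)
  then have t: "radical_seq {} (ys @ [y, cnj y])"
    using radical_seq_snoc[of "{}" "ys @ [y]" "cnj y"] root_later a sub by (auto simp: radical_seq_snoc)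
  have sub': "gen_subfield (set ys) \<subseteq> gen_subfield (set (ys @ [y, cnj y]))"
    by (intro gen_subfield_mono) auto
  have "set (vs @ [y]) \<subseteq> gen_subfield (set (ys @ [y, cnj y]))"
    "cnj ` set (vs @ [y]) \<subseteq> gen_subfield (set (ys @ [y, cnj y]))"
    using root_later.prems sub' by (auto intro: gen_subfield.gen)
  then obtain zs where "radical_seq {} (ys @ [y, cnj y] @ zs)"
    "x \<in> gen_subfield (set (ys @ [y, cnj y] @ zs))"
    using root_later.IH[OF t] by auto
  then show ?case by (intro exI[of _ "[y, cnj y] @ zs"]) auto
next
  case (conj_here vs a T)
  then show ?case using opnd_val_mem by (intro exI[of _ "[]"]) auto
next
  case (conj_later vs a T x)
  then show ?case using opnd_val_mem[of vs a "set ys"] by auto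
qed blast+

lemma radical_computable_imp_radical_tower:
  assumes "radical_computable \<alpha>"
  obtains N zs where "N > 0" "radical_tower N zs" "\<alpha> \<in> gen_subfield (set zs)"
proof -
  obtain T where "computes_at [] T \<alpha>" using assms unfolding radical_computable_def by blast
  then obtain zs where "radical_seq {} zs" "\<alpha> \<in> gen_subfield (set zs)"
    using computes_at_radical_seq[of "[]" T \<alpha> "[]"] by (auto simp: radical_seq_Nil)
  then show ?thesis using radical_seq_imp_radical_tower that by blast
qed

section \<open>All conjugates of a radical number lie in one radical tower\<close>

lemma map_poly_of_rat_mult:
  "map_poly (of_rat :: rat \<Rightarrow> complex) (a * b) = map_poly of_rat a * map_poly of_rat b"
  by (rule poly_eqI) (simp add: coeff_map_poly coeff_mult of_rat_sum of_rat_mult)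

lemma map_poly_of_rat_inj:
  "map_poly (of_rat :: rat \<Rightarrow> complex) a = map_poly of_rat b \<Longrightarrow> a = b"
  by (rule poly_eqI) (metis coeff_map_poly of_rat_0 of_rat_eq_iff)

lemma poly_over_Rats_map_of_rat: "poly_over \<rat> (map_poly (of_rat :: rat \<Rightarrow> complex) a)"
  by (simp add: poly_over_def coeff_map_poly)

lemma finite_roots_map_of_rat:
  "p \<noteq> 0 \<Longrightarrow> finite {z::complex. poly (map_poly of_rat p) z = 0}"
  using map_poly_of_rat_inj[of p 0] by (intro poly_roots_finite) auto

text \<open>The minimal polynomial of \<open>\<alpha>\<close> over \<open>\<rat>\<close> is rational and divides \<open>p\<close>, so by irreducibility
  it is \<open>p\<close> up to a unit and vanishes at \<open>\<alpha>'\<close>.\<close>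

lemma hom_to_conjugate_root:
  assumes irr: "irreducible p" and \<alpha>: "poly (map_poly of_rat p) \<alpha> = 0"
    and \<alpha>': "poly (map_poly of_rat p) \<alpha>' = 0"
  obtains \<sigma> where "hom_on (gen_subfield (\<rat> \<union> {\<alpha>})) \<sigma>" "\<sigma> \<alpha> = \<alpha>'"
proof -
  have Q: "csubfield (\<rat> :: complex set)" by (rule csubfield_Rats)
  define g where "g = (map_poly of_rat p :: complex poly)"
  have gQ: "poly_over \<rat> g" "g \<noteq> 0" "poly g \<alpha> = 0"
    using irr \<alpha> map_poly_of_rat_inj[of p 0] by (auto simp: g_def poly_over_Rats_map_of_rat)
  obtain m where m: "is_minpoly \<rat> \<alpha> m" using is_minpoly_exists[OF Q gQ] by blast
  then have mQ: "poly_over \<rat> m" "m \<noteq> 0" unfolding is_minpoly_def by auto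
  obtain q where q: "poly_over \<rat> q" "g = q * m" using is_minpoly_dvd[OF Q m gQ(1,3)] by blast
  obtain m0 where m0: "m = map_poly of_rat m0" using mQ(1) ratpolyE unfolding poly_over_def by blast
  obtain q0 where q0: "q = map_poly of_rat q0" using q(1) ratpolyE unfolding poly_over_def by blast
  have "p = q0 * m0"
    using q(2) unfolding g_def m0 q0 map_poly_of_rat_mult[symmetric] by (rule map_poly_of_rat_inj)
  then have "q0 dvd 1 \<or> m0 dvd 1" using irr irreducibleD by blast
  moreover have "\<not> m0 dvd 1"
  proof
    assume "m0 dvd 1"
    moreover have "m0 \<noteq> 0" using mQ(2) m0 by auto
    ultimately have "degree m0 = 0" using is_unit_iff_degree by blast
    then show False using is_minpoly_degree[OF Q m] m0 by (simp add: degree_map_poly)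
  qed
  ultimately obtain c where c: "q0 = [:c:]" "c \<noteq> 0"
    using is_unit_poly_iff[of q0] by (metis one_neq_zero dvd_0_left)
  have "poly q \<alpha>' = of_rat c" using q0 c(1) by (simp add: map_poly_pCons)
  then have m\<alpha>': "poly m \<alpha>' = 0" using \<alpha>' q(2) c(2) unfolding g_def by simp
  have "poly (map_poly id h) \<alpha>' = 0" if h: "poly_over \<rat> h" "poly h \<alpha> = 0" for h
  proof -
    obtain r where "h = r * m" using is_minpoly_dvd[OF Q m h] by blast
    then show ?thesis using m\<alpha>' by simp
  qed
  then obtain \<sigma> where "hom_on (gen_subfield (\<rat> \<union> {\<alpha>})) \<sigma>" "\<sigma> \<alpha> = \<alpha>'"
    using hom_extend_adjoin[OF Q hom_on_id gQ] by blast
  then show ?thesis by (rule that)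
qed

lemma conjugate_in_radical_tower:
  assumes tower: "radical_tower N zs" "\<alpha> \<in> gen_subfield (set zs)"
    and irr: "irreducible p" and \<alpha>: "poly (map_poly of_rat p) \<alpha> = 0"
    and \<alpha>': "poly (map_poly of_rat p) \<alpha>' = 0"
  shows "\<exists>zs'. radical_tower N zs' \<and> \<alpha>' \<in> gen_subfield (set zs')"
proof -
  define F where "F = gen_subfield (\<rat> \<union> {\<alpha>})"
  have F: "csubfield F" unfolding F_def by (rule csubfield_gen_subfield)
  obtain \<sigma> where \<sigma>: "hom_on F \<sigma>" "\<sigma> \<alpha> = \<alpha>'"
    using hom_to_conjugate_root[OF irr \<alpha> \<alpha>'] unfolding F_def by blast
  obtain \<tau> where \<tau>: "hom_on (gen_subfield (F \<union> set zs)) \<tau>" "\<forall>x\<in>F. \<tau> x = \<sigma> x"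
    using hom_extend_radical_seq[OF F \<sigma>(1) radical_tower_imp_radical_seq[OF tower(1)]] by blast
  define L where "L = gen_subfield (F \<union> set zs)"
  have L: "csubfield L" unfolding L_def by (rule csubfield_gen_subfield)
  have sub: "set zs \<subseteq> L" unfolding L_def using gen_subfield_subset by blast
  have "\<tau> \<alpha> = \<alpha>'" using \<tau>(2) \<sigma>(2) by (simp add: F_def gen_subfield.gen)
  then have "\<alpha>' \<in> \<tau> ` gen_subfield (set zs)" using tower(2) by blast
  also have "\<dots> = gen_subfield (set (map \<tau> zs))"
    using hom_image_gen_subfield[OF L \<tau>(1)[folded L_def] gen_subfield_least[OF sub L]] by simp
  finally show ?thesis using radical_tower_map_hom[OF L \<tau>(1)[folded L_def] sub tower(1)] by blast
qed

lemma roots_in_radical_tower: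
  assumes "radical_computable \<alpha>" "irreducible p" "poly (map_poly of_rat p) \<alpha> = 0"
  obtains N zs where "N > 0" "radical_tower N zs"
    "{z. poly (map_poly of_rat p) z = 0} \<subseteq> gen_subfield (set zs)"
proof -
  define R where "R = {z::complex. poly (map_poly of_rat p) z = 0}"
  obtain N zs0 where N: "N > 0" "radical_tower N zs0" "\<alpha> \<in> gen_subfield (set zs0)"
    using radical_computable_imp_radical_tower[OF assms(1)] by blast
  have "\<exists>zs. radical_tower N zs \<and> S \<subseteq> gen_subfield (set zs)" if "finite S" "S \<subseteq> R" for S
    using that
  proof (induction S rule: finite_induct)
    case empty then show ?case by (intro exI[of _ "[]"]) (auto simp: radical_tower_def)
  next
    case (insert x S)
    obtain zs where zs: "radical_tower N zs" "S \<subseteq> gen_subfield (set zs)" using insert by auto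
    obtain ys where ys: "radical_tower N ys" "x \<in> gen_subfield (set ys)"
      using conjugate_in_radical_tower[OF N(2,3) assms(2,3)] insert.prems by (auto simp: R_def)
    have "gen_subfield (set zs) \<subseteq> gen_subfield (set (zs @ ys))"
      "gen_subfield (set ys) \<subseteq> gen_subfield (set (zs @ ys))"
      by (simp_all add: gen_subfield_mono)
    then show ?case using zs ys radical_tower_append by (intro exI[of _ "zs @ ys"]) auto
  qed
  moreover have "finite R"
    unfolding R_def using assms(2) by (intro finite_roots_map_of_rat) auto
  ultimately obtain zs where "radical_tower N zs" "R \<subseteq> gen_subfield (set zs)" by blast
  then show ?thesis using N(1) that unfolding R_def by blast
qed

section \<open>Automorphisms and the Galois group\<close>

definition aut :: "complex set \<Rightarrow> complex set \<Rightarrow> (complex \<Rightarrow> complex) \<Rightarrow> bool" where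
  "aut L F \<rho> \<longleftrightarrow> bij_betw \<rho> L L \<and> hom_on L \<rho> \<and> (\<forall>x\<in>F. \<rho> x = x)"

text \<open>Elements of \<open>Gal K\<close> are the identity outside \<open>K\<close>; \<open>restr K \<rho>\<close> is the representative
  of \<open>\<rho>\<close> restricted to \<open>K\<close>.\<close>

definition restr :: "complex set \<Rightarrow> (complex \<Rightarrow> complex) \<Rightarrow> complex \<Rightarrow> complex" where
  "restr K \<rho> = (\<lambda>x. if x \<in> K then \<rho> x else x)"

lemma aut_id: "aut L F id"
  by (simp add: aut_def hom_on_def)

lemma aut_mem: "aut L F \<rho> \<Longrightarrow> x \<in> L \<Longrightarrow> \<rho> x \<in> L"
  unfolding aut_def bij_betw_def by blast

lemma aut_comp:
  assumes "aut L F \<rho>" "aut L F \<tau>" shows "aut L F (\<rho> \<circ> \<tau>)"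
proof -
  have "\<tau> x \<in> L" if "x \<in> L" for x using aut_mem[OF assms(2) that] .
  then show ?thesis
    using assms bij_betw_trans[of \<tau> L L \<rho> L] unfolding aut_def hom_on_def by simp
qed

lemma aut_inv:
  assumes L: "csubfield L" and FL: "F \<subseteq> L" and \<rho>: "aut L F \<rho>"
  shows "aut L F (inv_into L \<rho>)" "\<And>x. x \<in> L \<Longrightarrow> \<rho> (inv_into L \<rho> x) = x"
    "\<And>x. x \<in> L \<Longrightarrow> inv_into L \<rho> (\<rho> x) = x"
proof -
  have b: "bij_betw \<rho> L L" and h: "hom_on L \<rho>" and fx: "\<forall>x\<in>F. \<rho> x = x"
    using \<rho> unfolding aut_def by auto
  show fi: "\<rho> (inv_into L \<rho> x) = x" if "x \<in> L" for x
    using b that by (simp add: bij_betw_def f_inv_into_f)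
  show ii: "inv_into L \<rho> (\<rho> x) = x" if "x \<in> L" for x
    using b that by (simp add: bij_betw_def)
  have im: "inv_into L \<rho> x \<in> L" if "x \<in> L" for x
    using b that by (simp add: bij_betw_def inv_into_into)
  have "hom_on L (inv_into L \<rho>)"
    unfolding hom_on_def
  proof (intro conjI ballI)
    fix x y assume x: "x \<in> L" and y: "y \<in> L"
    let ?u = "inv_into L \<rho> x" and ?v = "inv_into L \<rho> y"
    have "\<rho> (?u + ?v) = x + y" using hom_add[OF L h im[OF x] im[OF y]] fi x y by simp
    then show "inv_into L \<rho> (x + y) = ?u + ?v"
      using ii[of "?u + ?v"] csubfieldD(3)[OF L im[OF x] im[OF y]] by simp
    have "\<rho> (?u * ?v) = x * y" using hom_mult[OF L h im[OF x] im[OF y]] fi x y by simp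
    then show "inv_into L \<rho> (x * y) = ?u * ?v"
      using ii[of "?u * ?v"] csubfieldD(4)[OF L im[OF x] im[OF y]] by simp
  next
    show "inv_into L \<rho> 1 = 1" using ii[OF csubfieldD(2)[OF L]] hom_one[OF L h] by simp
  qed
  moreover have "\<forall>x\<in>F. inv_into L \<rho> x = x" using fx ii FL by (metis subsetD)
  ultimately show "aut L F (inv_into L \<rho>)" using bij_betw_inv_into[OF b] by (simp add: aut_def)
qed

lemma aut_restrict:
  assumes L: "csubfield L" and K: "csubfield K" "K \<subseteq> L" and \<rho>: "aut L F \<rho>" and im: "\<rho> ` K = K"
  shows "aut K \<rat> \<rho>"
proof -
  have h: "hom_on L \<rho>" using \<rho> unfolding aut_def by blast
  have "bij_betw \<rho> K K" using inj_on_subset[OF hom_inj_on[OF L h] K(2)] im by (simp add: bij_betw_def)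
  moreover have "\<forall>x\<in>\<rat>. \<rho> x = x" using hom_of_rat[OF L h] by (auto elim: Rats_cases)
  ultimately show ?thesis using hom_on_subset[OF h K(2)] by (simp add: aut_def)
qed

lemma gal_auts_iff:
  "\<sigma> \<in> gal_auts K \<longleftrightarrow> aut K \<rat> \<sigma> \<and> (\<forall>x. x \<notin> K \<longrightarrow> \<sigma> x = x)"
proof
  assume s: "\<sigma> \<in> gal_auts K"
  then have "\<sigma> (of_rat 1) = of_rat 1" unfolding gal_auts_def by blast
  then show "aut K \<rat> \<sigma> \<and> (\<forall>x. x \<notin> K \<longrightarrow> \<sigma> x = x)"
    using s unfolding gal_auts_def aut_def hom_on_def by (auto elim: Rats_cases)
next
  assume "aut K \<rat> \<sigma> \<and> (\<forall>x. x \<notin> K \<longrightarrow> \<sigma> x = x)"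
  then show "\<sigma> \<in> gal_auts K" unfolding gal_auts_def aut_def hom_on_def by auto
qed

lemma restr_in_gal_auts:
  assumes K: "csubfield K" and \<rho>: "aut K \<rat> \<rho>" shows "restr K \<rho> \<in> gal_auts K"
proof -
  have eq: "restr K \<rho> x = \<rho> x" if "x \<in> K" for x using that by (simp add: restr_def)
  have "bij_betw (restr K \<rho>) K K"
    using \<rho> bij_betw_cong[of K "restr K \<rho>" \<rho> K] eq unfolding aut_def by blast
  moreover have "hom_on K (restr K \<rho>)"
    using \<rho> eq csubfieldD[OF K] unfolding aut_def hom_on_def by simp
  moreover have "\<forall>x\<in>\<rat>. restr K \<rho> x = x" using \<rho> eq Rats_subset_csubfield[OF K] unfolding aut_def by auto
  ultimately show ?thesis unfolding gal_auts_iff aut_def by (simp add: restr_def)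
qed

lemma restr_comp: "(\<And>x. x \<in> K \<Longrightarrow> \<tau> x \<in> K) \<Longrightarrow> restr K (\<rho> \<circ> \<tau>) = restr K \<rho> \<circ> restr K \<tau>"
  unfolding restr_def by auto

lemma Gal_group:
  assumes K: "csubfield K" shows "group (Gal K)"
proof (rule groupI)
  fix x y assume "x \<in> carrier (Gal K)" "y \<in> carrier (Gal K)"
  then show "x \<otimes>\<^bsub>Gal K\<^esub> y \<in> carrier (Gal K)"
    by (simp add: Gal_def gal_auts_iff aut_comp)
next
  show "\<one>\<^bsub>Gal K\<^esub> \<in> carrier (Gal K)" by (simp add: Gal_def gal_auts_iff aut_id)
next
  fix x assume "x \<in> carrier (Gal K)"
  then have ax: "aut K \<rat> x" and out: "\<forall>z. z \<notin> K \<longrightarrow> x z = z"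
    by (simp_all add: Gal_def gal_auts_iff)
  have QK: "\<rat> \<subseteq> K" using Rats_subset_csubfield[OF K] .
  define y where "y = restr K (inv_into K x)"
  have "y \<in> gal_auts K" unfolding y_def by (rule restr_in_gal_auts[OF K aut_inv(1)[OF K QK ax]])
  moreover have "y \<circ> x = id"
  proof
    fix z show "(y \<circ> x) z = id z"
      using aut_inv(3)[OF K QK ax, of z] aut_mem[OF ax, of z] out
      by (cases "z \<in> K") (simp_all add: y_def restr_def)
  qed
  ultimately show "\<exists>y\<in>carrier (Gal K). y \<otimes>\<^bsub>Gal K\<^esub> x = \<one>\<^bsub>Gal K\<^esub>"
    unfolding Gal_def by auto
qed (simp_all add: Gal_def o_assoc)

text \<open>Normality of \<open>K\<close> over \<open>\<rat>\<close>, phrased inside \<open>\<complex>\<close>.\<close>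

definition normal_subfield :: "complex set \<Rightarrow> bool" where
  "normal_subfield K \<longleftrightarrow> (\<forall>L \<rho>. csubfield L \<and> K \<subseteq> L \<and> hom_on L \<rho> \<longrightarrow> \<rho> ` K = K)"

lemma normal_subfield_splitting_field:
  assumes "p \<noteq> 0" shows "normal_subfield (splitting_field p)"
  unfolding normal_subfield_def
proof (intro allI impI, elim conjE)
  fix L \<rho> assume L: "csubfield L" and KL: "splitting_field p \<subseteq> L" and h: "hom_on L \<rho>"
  define R where "R = {z::complex. poly (map_poly of_rat p) z = 0}"
  have RL: "R \<subseteq> L" using KL gen_subfield_subset[of R] unfolding splitting_field_def R_def by blast
  have "\<rho> ` R \<subseteq> R"
  proof
    fix y assume "y \<in> \<rho> ` R"
    then obtain x where x: "x \<in> R" "y = \<rho> x" by blast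
    then have "poly (map_poly of_rat p) y = \<rho> (poly (map_poly of_rat p) x)"
      using hom_poly_of_rat[OF L h, of x p] RL by auto
    then show "y \<in> R" using x hom_zero[OF L h] unfolding R_def by simp
  qed
  moreover have "inj_on \<rho> R" using inj_on_subset[OF hom_inj_on[OF L h] RL] .
  ultimately have "\<rho> ` R = R"
    using finite_roots_map_of_rat[OF assms] by (simp add: R_def endo_inj_surj)
  then show "\<rho> ` splitting_field p = splitting_field p"
    using hom_image_gen_subfield[OF L h] KL unfolding splitting_field_def R_def by metis
qed

lemma restr_in_Gal:
  assumes "normal_subfield K" "csubfield K" "csubfield L" "K \<subseteq> L" "aut L F \<rho>"
  shows "restr K \<rho> \<in> carrier (Gal K)"
proof -
  have "\<rho> ` K = K" using assms unfolding normal_subfield_def aut_def by blast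
  then show ?thesis using restr_in_gal_auts[OF assms(2) aut_restrict] assms by (simp add: Gal_def)
qed

lemma inv_Gal_restr:
  assumes K: "normal_subfield K" "csubfield K" and L: "csubfield L" "K \<subseteq> L" "F \<subseteq> L"
    and \<rho>: "aut L F \<rho>"
  shows "inv\<^bsub>Gal K\<^esub> (restr K \<rho>) = restr K (inv_into L \<rho>)"
proof -
  interpret group "Gal K" by (rule Gal_group[OF K(2)])
  have \<rho>': "aut L F (inv_into L \<rho>)" using aut_inv(1)[OF L(1,3) \<rho>] .
  have "\<rho> ` K = K" using K(1) L \<rho> unfolding normal_subfield_def aut_def by blast
  then have "restr K (inv_into L \<rho>) \<circ> restr K \<rho> = id"
    using aut_inv(3)[OF L(1,3) \<rho>] L(2) by (auto simp: restr_def fun_eq_iff)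
  then show ?thesis
    using inv_equality restr_in_Gal[OF K L(1,2) \<rho>] restr_in_Gal[OF K L(1,2) \<rho>']
    by (simp add: Gal_def)
qed

section \<open>Abelian generators: roots of unity and Kummer elements\<close>

definition root_unity :: "nat \<Rightarrow> complex" where
  "root_unity N = cis (2 * pi / real N)"

lemma root_unity_pow_self: "N > 0 \<Longrightarrow> root_unity N ^ N = 1"
  by (simp add: root_unity_def DeMoivre)

lemma root_of_unity_eq_power:
  assumes N: "N > 0" and z: "z ^ N = 1"
  obtains t where "z = root_unity N ^ t"
proof -
  have "z \<in> (\<lambda>k. cis (2 * pi * real k / real N)) ` {..<N}"
    using bij_betw_roots_unity[OF N] z unfolding bij_betw_def by auto
  then obtain k where "z = cis (2 * pi * real k / real N)" by auto
  then have "z = root_unity N ^ k" by (simp add: root_unity_def DeMoivre mult.commute)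
  then show ?thesis by (rule that)
qed

text \<open>\<open>F(\<beta>)/F\<close> is an abelian Galois extension.\<close>

definition abelian_generator :: "complex set \<Rightarrow> complex \<Rightarrow> bool" where
  "abelian_generator F \<beta> \<longleftrightarrow> (\<exists>g. poly_over F g \<and> g \<noteq> 0 \<and> poly g \<beta> = 0) \<and>
     (\<forall>L \<sigma>. csubfield L \<and> F \<subseteq> L \<and> \<beta> \<in> L \<and> hom_on L \<sigma> \<and> (\<forall>x\<in>F. \<sigma> x = x) \<longrightarrow>
        \<sigma> \<beta> \<in> gen_subfield (F \<union> {\<beta>}) \<and> \<beta> \<in> gen_subfield (F \<union> {\<sigma> \<beta>})) \<and>
     (\<forall>L \<sigma>1 \<sigma>2. csubfield L \<and> F \<subseteq> L \<and> \<beta> \<in> L \<and> hom_on L \<sigma>1 \<and> hom_on L \<sigma>2 \<and>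
        (\<forall>x\<in>F. \<sigma>1 x = x \<and> \<sigma>2 x = x) \<longrightarrow> \<sigma>1 (\<sigma>2 \<beta>) = \<sigma>2 (\<sigma>1 \<beta>))"

lemma hom_root_unity:
  assumes N: "N > 0" and L: "csubfield L" "root_unity N \<in> L" and \<sigma>: "hom_on L \<sigma>"
  obtains a where "\<sigma> (root_unity N) = root_unity N ^ a"
proof -
  have "\<sigma> (root_unity N) ^ N = 1"
    using hom_power[OF L(1) \<sigma> L(2), of N] root_unity_pow_self[OF N] hom_one[OF L(1) \<sigma>] by simp
  then show ?thesis using root_of_unity_eq_power[OF N] that by blast
qed

text \<open>An embedding permutes the finitely many \<open>N\<close>-th roots of unity, so \<open>\<zeta>\<close> is itself a power
  of its image.\<close>

lemma root_unity_power_of_hom_image: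
  assumes N: "N > 0" and L: "csubfield L" "root_unity N \<in> L" and \<sigma>: "hom_on L \<sigma>"
  obtains s where "root_unity N = \<sigma> (root_unity N) ^ s"
proof -
  define \<mu> where "\<mu> = {z::complex. z ^ N = 1}"
  have \<mu>L: "\<mu> \<subseteq> L"
    using root_of_unity_eq_power[OF N] csubfield_power[OF L] unfolding \<mu>_def by blast
  have "\<sigma> ` \<mu> \<subseteq> \<mu>"
  proof
    fix w assume "w \<in> \<sigma> ` \<mu>"
    then obtain z where z: "z \<in> \<mu>" "w = \<sigma> z" by blast
    then have "w ^ N = \<sigma> (z ^ N)" using hom_power[OF L(1) \<sigma>] \<mu>L by auto
    then show "w \<in> \<mu>" using z(1) hom_one[OF L(1) \<sigma>] unfolding \<mu>_def by simp
  qed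
  moreover have "inj_on \<sigma> \<mu>" using inj_on_subset[OF hom_inj_on[OF L(1) \<sigma>] \<mu>L] .
  moreover have "finite \<mu>" unfolding \<mu>_def using N by (intro finite_roots_unity) simp
  ultimately have "\<sigma> ` \<mu> = \<mu>" by (simp add: endo_inj_surj)
  moreover have "root_unity N \<in> \<mu>" using root_unity_pow_self[OF N] unfolding \<mu>_def by simp
  ultimately obtain w where w: "w \<in> \<mu>" "root_unity N = \<sigma> w" by (metis imageE)
  obtain s where ws: "w = root_unity N ^ s"
    using root_of_unity_eq_power[OF N] w(1) unfolding \<mu>_def by blast
  have "root_unity N = \<sigma> (root_unity N ^ s)" using w(2) ws by (simp only:)
  also have "\<dots> = \<sigma> (root_unity N) ^ s" by (rule hom_power[OF L(1) \<sigma> L(2)])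
  finally show ?thesis by (rule that)
qed

lemma abelian_generator_root_unity:
  assumes F: "csubfield F" and N: "N > 0"
  shows "abelian_generator F (root_unity N)"
proof -
  let ?\<zeta> = "root_unity N"
  have "\<exists>g. poly_over F g \<and> g \<noteq> 0 \<and> poly g ?\<zeta> = 0"
  proof (intro exI conjI)
    show "poly_over F (monom 1 N - 1)"
      using F by (intro poly_over_diff poly_over_monom poly_over_1) (auto simp: csubfieldD)
    have "coeff (monom 1 N - 1) N = (1::complex)" using N by simp
    then show "monom 1 N - 1 \<noteq> (0 :: complex poly)" by (metis coeff_0 zero_neq_one)
    show "poly (monom 1 N - 1) ?\<zeta> = 0" using root_unity_pow_self[OF N] by (simp add: poly_monom)
  qed
  moreover have "\<sigma> ?\<zeta> \<in> gen_subfield (F \<union> {?\<zeta>}) \<and> ?\<zeta> \<in> gen_subfield (F \<union> {\<sigma> ?\<zeta>})"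
    if L: "csubfield L" "?\<zeta> \<in> L" and \<sigma>: "hom_on L \<sigma>" for L \<sigma>
  proof
    obtain a where "\<sigma> ?\<zeta> = ?\<zeta> ^ a" using hom_root_unity[OF N L \<sigma>] .
    then show "\<sigma> ?\<zeta> \<in> gen_subfield (F \<union> {?\<zeta>})"
      using csubfield_power[OF csubfield_gen_subfield] gen_subfield.gen by simp
    obtain s where "?\<zeta> = \<sigma> ?\<zeta> ^ s" using root_unity_power_of_hom_image[OF N L \<sigma>] .
    then show "?\<zeta> \<in> gen_subfield (F \<union> {\<sigma> ?\<zeta>})"
      using csubfield_power[OF csubfield_gen_subfield] gen_subfield.gen by (metis UnI2 singletonI)
  qed
  moreover have "\<sigma>1 (\<sigma>2 ?\<zeta>) = \<sigma>2 (\<sigma>1 ?\<zeta>)"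
    if L: "csubfield L" "?\<zeta> \<in> L" and \<sigma>: "hom_on L \<sigma>1" "hom_on L \<sigma>2" for L \<sigma>1 \<sigma>2
  proof -
    obtain a1 where a1: "\<sigma>1 ?\<zeta> = ?\<zeta> ^ a1" using hom_root_unity[OF N L \<sigma>(1)] .
    obtain a2 where a2: "\<sigma>2 ?\<zeta> = ?\<zeta> ^ a2" using hom_root_unity[OF N L \<sigma>(2)] .
    have "\<sigma>1 (\<sigma>2 ?\<zeta>) = ?\<zeta> ^ (a1 * a2)"
      using a1 a2 hom_power[OF L(1) \<sigma>(1) L(2)] by (simp add: power_mult)
    moreover have "\<sigma>2 (\<sigma>1 ?\<zeta>) = ?\<zeta> ^ (a2 * a1)"
      using a1 a2 hom_power[OF L(1) \<sigma>(2) L(2)] by (simp add: power_mult)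
    ultimately show ?thesis by (simp add: mult.commute)
  qed
  ultimately show ?thesis unfolding abelian_generator_def by blast
qed

text \<open>If \<open>\<beta>\<^sup>k \<in> F\<close> and \<open>F\<close> contains the \<open>k\<close>-th roots of unity, an embedding fixing \<open>F\<close> can only
  multiply \<open>\<beta>\<close> by one of them.\<close>

lemma hom_kummer_ratio:
  assumes N: "N > 0" and F: "csubfield F" "root_unity N \<in> F" and k: "k \<ge> 1" "k dvd N" "\<beta> ^ k \<in> F"
    and L: "csubfield L" "F \<subseteq> L" "\<beta> \<in> L" and \<sigma>: "hom_on L \<sigma>" "\<forall>x\<in>F. \<sigma> x = x"
  obtains \<omega> where "\<omega> \<in> F" "\<omega> \<noteq> 0" "\<sigma> \<beta> = \<omega> * \<beta>"
proof (cases "\<beta> = 0")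
  case True
  then show ?thesis using that hom_zero[OF L(1) \<sigma>(1)] csubfieldD(2)[OF F(1)] by auto
next
  case False
  define \<omega> where "\<omega> = \<sigma> \<beta> / \<beta>"
  have "\<sigma> \<beta> ^ k = \<sigma> (\<beta> ^ k)" using hom_power[OF L(1) \<sigma>(1) L(3)] by simp
  also have "\<dots> = \<beta> ^ k" using \<sigma>(2) k(3) by blast
  finally have "\<sigma> \<beta> ^ k = \<beta> ^ k" .
  then have \<omega>k: "\<omega> ^ k = 1" unfolding \<omega>_def using False by (simp add: power_divide)
  then have "\<omega> ^ N = 1" using k(2) by (auto simp: power_mult elim!: dvdE)
  then obtain t where "\<omega> = root_unity N ^ t" using root_of_unity_eq_power[OF N] by blast
  then have "\<omega> \<in> F" using csubfield_power[OF F] by simp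
  moreover have "\<omega> \<noteq> 0" using \<omega>k k(1) by (metis power_0_left zero_neq_one not_one_le_zero)
  moreover have "\<sigma> \<beta> = \<omega> * \<beta>" unfolding \<omega>_def using False by simp
  ultimately show ?thesis by (rule that)
qed

lemma abelian_generator_kummer:
  assumes N: "N > 0" and F: "csubfield F" "root_unity N \<in> F" and k: "k \<ge> 1" "k dvd N" "\<beta> ^ k \<in> F"
  shows "abelian_generator F \<beta>"
proof -
  have "\<exists>g. poly_over F g \<and> g \<noteq> 0 \<and> poly g \<beta> = 0"
  proof (intro exI conjI)
    show "poly_over F (monom 1 k - [:\<beta> ^ k:])"
      using F k by (intro poly_over_diff poly_over_monom poly_over_const) (auto simp: csubfieldD)
    have "coeff (monom 1 k - [:\<beta> ^ k:]) k = 1" using k(1) by (simp add: coeff_pCons split: nat.split)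
    then show "monom 1 k - [:\<beta> ^ k:] \<noteq> 0" by (metis coeff_0 zero_neq_one)
    show "poly (monom 1 k - [:\<beta> ^ k:]) \<beta> = 0" by (simp add: poly_monom)
  qed
  moreover have "\<sigma> \<beta> \<in> gen_subfield (F \<union> {\<beta>}) \<and> \<beta> \<in> gen_subfield (F \<union> {\<sigma> \<beta>})"
    if L: "csubfield L" "F \<subseteq> L" "\<beta> \<in> L" and \<sigma>: "hom_on L \<sigma>" "\<forall>x\<in>F. \<sigma> x = x" for L \<sigma>
  proof
    obtain \<omega> where \<omega>: "\<omega> \<in> F" "\<omega> \<noteq> 0" "\<sigma> \<beta> = \<omega> * \<beta>" using hom_kummer_ratio[OF N F k L \<sigma>] .
    have G: "csubfield (gen_subfield (F \<union> {\<beta>}))" "csubfield (gen_subfield (F \<union> {\<sigma> \<beta>}))"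
      by (rule csubfield_gen_subfield)+
    show "\<sigma> \<beta> \<in> gen_subfield (F \<union> {\<beta>})"
      using \<omega> csubfieldD(4)[OF G(1)] gen_subfield.gen by simp
    have "\<beta> = \<sigma> \<beta> / \<omega>" using \<omega> by simp
    then show "\<beta> \<in> gen_subfield (F \<union> {\<sigma> \<beta>})"
      using \<omega>(1) csubfield_divide[OF G(2)] gen_subfield.gen by (metis UnI1 UnI2 singletonI)
  qed
  moreover have "\<sigma>1 (\<sigma>2 \<beta>) = \<sigma>2 (\<sigma>1 \<beta>)"
    if L: "csubfield L" "F \<subseteq> L" "\<beta> \<in> L" and \<sigma>: "hom_on L \<sigma>1" "hom_on L \<sigma>2"
      and fix1: "\<forall>x\<in>F. \<sigma>1 x = x" and fix2: "\<forall>x\<in>F. \<sigma>2 x = x" for L \<sigma>1 \<sigma>2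
  proof -
    obtain \<omega>1 where \<omega>1: "\<omega>1 \<in> F" "\<sigma>1 \<beta> = \<omega>1 * \<beta>" using hom_kummer_ratio[OF N F k L \<sigma>(1) fix1] by blast
    obtain \<omega>2 where \<omega>2: "\<omega>2 \<in> F" "\<sigma>2 \<beta> = \<omega>2 * \<beta>" using hom_kummer_ratio[OF N F k L \<sigma>(2) fix2] by blast
    have "\<sigma>1 (\<sigma>2 \<beta>) = \<omega>2 * (\<omega>1 * \<beta>)"
      using \<omega>1 \<omega>2 hom_mult[OF L(1) \<sigma>(1), of \<omega>2 \<beta>] L fix1 by auto
    moreover have "\<sigma>2 (\<sigma>1 \<beta>) = \<omega>1 * (\<omega>2 * \<beta>)"
      using \<omega>1 \<omega>2 hom_mult[OF L(1) \<sigma>(2), of \<omega>1 \<beta>] L fix2 by auto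
    ultimately show ?thesis by (simp add: algebra_simps)
  qed
  ultimately show ?thesis unfolding abelian_generator_def by blast
qed

lemma hom_bij_betw_adjoin:
  assumes h: "hom_on (gen_subfield (K \<union> {\<beta>})) \<rho>" and im: "\<rho> ` K = K"
    and \<rho>\<beta>: "\<rho> \<beta> \<in> gen_subfield (K \<union> {\<beta>})" and \<beta>: "\<beta> \<in> gen_subfield (K \<union> {\<rho> \<beta>})"
  shows "bij_betw \<rho> (gen_subfield (K \<union> {\<beta>})) (gen_subfield (K \<union> {\<beta>}))"
proof -
  let ?L = "gen_subfield (K \<union> {\<beta>})"
  have L: "csubfield ?L" by (rule csubfield_gen_subfield)
  have "\<rho> ` ?L = gen_subfield (\<rho> ` (K \<union> {\<beta>}))" by (rule hom_image_gen_subfield[OF L h]) simp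
  also have "\<rho> ` (K \<union> {\<beta>}) = K \<union> {\<rho> \<beta>}" using im by auto
  also have "gen_subfield (K \<union> {\<rho> \<beta>}) = ?L"
  proof
    show "gen_subfield (K \<union> {\<rho> \<beta>}) \<subseteq> ?L"
      using L \<rho>\<beta> gen_subfield_subset[of "K \<union> {\<beta>}"] by (intro gen_subfield_least) auto
    show "?L \<subseteq> gen_subfield (K \<union> {\<rho> \<beta>})"
      using \<beta> gen_subfield_subset[of "K \<union> {\<rho> \<beta>}"]
      by (intro gen_subfield_least csubfield_gen_subfield) auto
  qed
  finally show ?thesis using hom_inj_on[OF L h] by (simp add: bij_betw_def)
qed

lemma aut_extend_abelian_generator:
  assumes Kp: "csubfield Kp" "F \<subseteq> Kp" and \<rho>: "aut Kp F \<rho>" and \<beta>: "abelian_generator F \<beta>"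
  obtains \<rho>' where "aut (gen_subfield (Kp \<union> {\<beta>})) F \<rho>'" "\<forall>x\<in>Kp. \<rho>' x = \<rho> x"
proof -
  define Kn where "Kn = gen_subfield (Kp \<union> {\<beta>})"
  have Kn: "csubfield Kn" "\<beta> \<in> Kn" and FKn: "F \<subseteq> Kn"
    unfolding Kn_def using csubfield_gen_subfield gen_subfield_subset Kp(2) by blast+
  obtain g where "poly_over F g" "g \<noteq> 0" "poly g \<beta> = 0"
    using \<beta> unfolding abelian_generator_def by blast
  then have g: "poly_over Kp g" "g \<noteq> 0" "poly g \<beta> = 0" using Kp(2) by (auto simp: poly_over_def)
  have h: "hom_on Kp \<rho>" and im: "\<rho> ` Kp = Kp" using \<rho> unfolding aut_def bij_betw_def by auto
  obtain \<rho>' where \<rho>': "hom_on Kn \<rho>'" "\<forall>x\<in>Kp. \<rho>' x = \<rho> x"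
    using hom_extend_algebraic[OF Kp(1) h g] unfolding Kn_def by blast
  have fixF: "\<forall>x\<in>F. \<rho>' x = x" using \<rho>'(2) \<rho> Kp(2) unfolding aut_def by auto
  have "\<rho>' \<beta> \<in> gen_subfield (F \<union> {\<beta>})" "\<beta> \<in> gen_subfield (F \<union> {\<rho>' \<beta>})"
    using \<beta> Kn FKn \<rho>'(1) fixF unfolding abelian_generator_def by blast+
  then have "\<rho>' \<beta> \<in> Kn" "\<beta> \<in> gen_subfield (Kp \<union> {\<rho>' \<beta>})"
    using gen_subfield_mono[of "F \<union> _" "Kp \<union> _"] Kp(2) unfolding Kn_def by blast+
  moreover have "\<rho>' ` Kp = Kp" using \<rho>'(2) im by (simp add: image_def)
  ultimately have "bij_betw \<rho>' Kn Kn"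
    using hom_bij_betw_adjoin[of Kp \<beta> \<rho>'] \<rho>'(1) unfolding Kn_def by blast
  then show ?thesis using that \<rho>' fixF unfolding aut_def Kn_def by blast
qed

section \<open>Solvability of the Galois group\<close>

lemma (in group) solvable_if_commutator_chain:
  assumes sub: "\<And>n. subgroup (H n) G" and H0: "carrier G \<subseteq> H 0"
    and comm: "\<And>n x y. n < m \<Longrightarrow> x \<in> H n \<Longrightarrow> y \<in> H n \<Longrightarrow> x \<otimes> y \<otimes> inv x \<otimes> inv y \<in> H (Suc n)"
    and Hm: "H m \<subseteq> {\<one>}"
  shows "solvable G"
proof -
  have "(derived G ^^ n) (carrier G) \<subseteq> H n" if "n \<le> m" for n
    using that
  proof (induction n)
    case (Suc n)
    then have "derived_set G ((derived G ^^ n) (carrier G)) \<subseteq> H (Suc n)"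
      using comm[of n] by fastforce
    then show ?case unfolding derived_def by (simp add: generate_subgroup_incl[OF _ sub])
  qed (use H0 in simp)
  then have "(derived G ^^ m) (carrier G) \<subseteq> {\<one>}" using Hm by blast
  moreover have "\<one> \<in> (derived G ^^ m) (carrier G)"
    using subgroup.one_closed[OF exp_of_derived_is_subgroup[OF subgroup_self]] by blast
  ultimately show ?thesis using solvable_iff_trivial_derived_seq by blast
qed

definition restr_auts :: "complex set \<Rightarrow> complex set \<Rightarrow> complex set \<Rightarrow> (complex \<Rightarrow> complex) set" where
  "restr_auts K L F = {restr K \<rho> | \<rho>. aut L F \<rho>}"

lemma subgroup_restr_auts:
  assumes K: "normal_subfield K" "csubfield K" and L: "csubfield L" "K \<subseteq> L" "F \<subseteq> L"
  shows "subgroup (restr_auts K L F) (Gal K)"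
proof -
  interpret group "Gal K" by (rule Gal_group[OF K(2)])
  show ?thesis
  proof (rule subgroupI)
    show "restr_auts K L F \<subseteq> carrier (Gal K)"
      unfolding restr_auts_def using restr_in_Gal[OF K L(1,2)] by blast
    show "restr_auts K L F \<noteq> {}" unfolding restr_auts_def using aut_id by blast
  next
    fix a assume "a \<in> restr_auts K L F"
    then obtain \<rho> where \<rho>: "a = restr K \<rho>" "aut L F \<rho>" unfolding restr_auts_def by blast
    then show "inv\<^bsub>Gal K\<^esub> a \<in> restr_auts K L F"
      using inv_Gal_restr[OF K L] aut_inv(1)[OF L(1,3)] unfolding restr_auts_def by blast
  next
    fix a b assume "a \<in> restr_auts K L F" "b \<in> restr_auts K L F"
    then obtain \<rho> \<tau> where \<rho>: "a = restr K \<rho>" "aut L F \<rho>" and \<tau>: "b = restr K \<tau>" "aut L F \<tau>"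
      unfolding restr_auts_def by blast
    have "\<tau> ` K = K" using K(1) L \<tau>(2) unfolding normal_subfield_def aut_def by blast
    then have "restr K (\<rho> \<circ> \<tau>) = restr K \<rho> \<circ> restr K \<tau>" by (intro restr_comp) blast
    then have "a \<otimes>\<^bsub>Gal K\<^esub> b = restr K (\<rho> \<circ> \<tau>)" using \<rho>(1) \<tau>(1) by (simp add: Gal_def)
    then show "a \<otimes>\<^bsub>Gal K\<^esub> b \<in> restr_auts K L F"
      using aut_comp[OF \<rho>(2) \<tau>(2)] unfolding restr_auts_def by blast
  qed
qed

lemma restr_auts_trivial:
  assumes "K \<subseteq> F" shows "restr_auts K L F \<subseteq> {\<one>\<^bsub>Gal K\<^esub>}"
proof
  fix a assume "a \<in> restr_auts K L F"
  then obtain \<rho> where "a = restr K \<rho>" "\<forall>x\<in>F. \<rho> x = x" unfolding restr_auts_def aut_def by blast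
  then have "a = id" using assms by (auto simp: restr_def fun_eq_iff)
  then show "a \<in> {\<one>\<^bsub>Gal K\<^esub>}" by (simp add: Gal_def)
qed

lemma carrier_Gal_subset_restr_auts:
  assumes "csubfield K" shows "carrier (Gal K) \<subseteq> restr_auts K K (gen_subfield {})"
proof
  fix \<sigma> assume "\<sigma> \<in> carrier (Gal K)"
  then have \<sigma>: "aut K \<rat> \<sigma>" "\<sigma> = restr K \<sigma>"
    by (auto simp: Gal_def gal_auts_iff restr_def fun_eq_iff)
  then have "aut K (gen_subfield {}) \<sigma>" using gen_subfield_empty_subset_Rats unfolding aut_def by blast
  then show "\<sigma> \<in> restr_auts K K (gen_subfield {})" using \<sigma>(2) unfolding restr_auts_def by blast
qed

lemma Gal_commutator_restr:
  assumes K: "normal_subfield K" "csubfield K" and L: "csubfield L" "K \<subseteq> L" "F \<subseteq> L"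
    and \<rho>: "aut L F \<rho>" and \<tau>: "aut L F \<tau>"
  shows "restr K \<rho> \<otimes>\<^bsub>Gal K\<^esub> restr K \<tau> \<otimes>\<^bsub>Gal K\<^esub> inv\<^bsub>Gal K\<^esub> restr K \<rho> \<otimes>\<^bsub>Gal K\<^esub> inv\<^bsub>Gal K\<^esub> restr K \<tau>
    = restr K (\<rho> \<circ> \<tau> \<circ> inv_into L \<rho> \<circ> inv_into L \<tau>)"
proof -
  have stable: "f z \<in> K" if "aut L F f" "z \<in> K" for f z
    using K(1) L that unfolding normal_subfield_def aut_def by blast
  have auts: "aut L F (inv_into L \<rho>)" "aut L F (inv_into L \<tau>)"
    using aut_inv(1)[OF L(1,3)] \<rho> \<tau> by blast+
  have "restr K \<rho> \<otimes>\<^bsub>Gal K\<^esub> restr K \<tau> \<otimes>\<^bsub>Gal K\<^esub> inv\<^bsub>Gal K\<^esub> restr K \<rho> \<otimes>\<^bsub>Gal K\<^esub> inv\<^bsub>Gal K\<^esub> restr K \<tau>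
      = restr K \<rho> \<circ> restr K \<tau> \<circ> restr K (inv_into L \<rho>) \<circ> restr K (inv_into L \<tau>)"
    by (simp add: inv_Gal_restr[OF K L \<rho>] inv_Gal_restr[OF K L \<tau>]) (simp add: Gal_def)
  also have "\<dots> = restr K (\<rho> \<circ> \<tau> \<circ> inv_into L \<rho> \<circ> inv_into L \<tau>)"
    using stable \<rho> \<tau> auts aut_comp by (simp add: restr_comp[symmetric])
  finally show ?thesis .
qed

lemma aut_commutator_fixes_abelian_generator:
  assumes \<beta>: "abelian_generator F \<beta>" and L: "csubfield L" "F \<subseteq> L" "\<beta> \<in> L"
    and \<rho>: "aut L F \<rho>" and \<tau>: "aut L F \<tau>"
  shows "(\<rho> \<circ> \<tau> \<circ> inv_into L \<rho> \<circ> inv_into L \<tau>) \<beta> = \<beta>"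
proof -
  let ?\<rho>' = "inv_into L \<rho>" and ?\<tau>' = "inv_into L \<tau>"
  have "aut L F ?\<rho>'" "aut L F ?\<tau>'" using aut_inv(1)[OF L(1,2)] \<rho> \<tau> by blast+
  then have "?\<rho>' (?\<tau>' \<beta>) = ?\<tau>' (?\<rho>' \<beta>)" using \<beta> L unfolding abelian_generator_def aut_def by blast
  then have "(\<rho> \<circ> \<tau> \<circ> ?\<rho>' \<circ> ?\<tau>') \<beta> = \<rho> (\<tau> (?\<tau>' (?\<rho>' \<beta>)))" by simp
  also have "\<dots> = \<beta>"
    using aut_inv(2)[OF L(1,2) \<tau>] aut_inv(2)[OF L(1,2) \<rho> L(3)] aut_mem[OF aut_inv(1)[OF L(1,2) \<rho>] L(3)]
    by simp
  finally show ?thesis .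
qed

lemma commutator_restr_auts_adjoin:
  assumes K: "normal_subfield K" "csubfield K" and Kp: "csubfield Kp" "K \<subseteq> Kp" "F \<subseteq> Kp"
    and \<beta>: "abelian_generator F \<beta>"
    and x: "x \<in> restr_auts K Kp F" and y: "y \<in> restr_auts K Kp F"
  shows "x \<otimes>\<^bsub>Gal K\<^esub> y \<otimes>\<^bsub>Gal K\<^esub> inv\<^bsub>Gal K\<^esub> x \<otimes>\<^bsub>Gal K\<^esub> inv\<^bsub>Gal K\<^esub> y
           \<in> restr_auts K (gen_subfield (Kp \<union> {\<beta>})) (gen_subfield (F \<union> {\<beta>}))"
proof -
  define Kn where "Kn = gen_subfield (Kp \<union> {\<beta>})"
  have Kn: "csubfield Kn" "K \<subseteq> Kn" "F \<subseteq> Kn" "\<beta> \<in> Kn"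
    unfolding Kn_def using csubfield_gen_subfield gen_subfield_subset Kp(2,3) by blast+
  obtain \<rho> \<tau> where \<rho>: "x = restr K \<rho>" "aut Kp F \<rho>" and \<tau>: "y = restr K \<tau>" "aut Kp F \<tau>"
    using x y unfolding restr_auts_def by blast
  obtain \<rho>1 where \<rho>1: "aut Kn F \<rho>1" "\<forall>z\<in>Kp. \<rho>1 z = \<rho> z"
    using aut_extend_abelian_generator[OF Kp(1,3) \<rho>(2) \<beta>] unfolding Kn_def by blast
  obtain \<tau>1 where \<tau>1: "aut Kn F \<tau>1" "\<forall>z\<in>Kp. \<tau>1 z = \<tau> z"
    using aut_extend_abelian_generator[OF Kp(1,3) \<tau>(2) \<beta>] unfolding Kn_def by blast
  have "x = restr K \<rho>1" "y = restr K \<tau>1"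
    using \<rho> \<tau> \<rho>1(2) \<tau>1(2) Kp(2) by (auto simp: restr_def fun_eq_iff)
  moreover define c where "c = \<rho>1 \<circ> \<tau>1 \<circ> inv_into Kn \<rho>1 \<circ> inv_into Kn \<tau>1"
  ultimately have eq: "x \<otimes>\<^bsub>Gal K\<^esub> y \<otimes>\<^bsub>Gal K\<^esub> inv\<^bsub>Gal K\<^esub> x \<otimes>\<^bsub>Gal K\<^esub> inv\<^bsub>Gal K\<^esub> y = restr K c"
    using Gal_commutator_restr[OF K Kn(1-3) \<rho>1(1) \<tau>1(1)] by simp
  have c: "aut Kn F c"
    unfolding c_def using \<rho>1(1) \<tau>1(1) aut_inv(1)[OF Kn(1,3)] by (intro aut_comp) blast+
  have "c w = id w" if "w \<in> F \<union> {\<beta>}" for w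
    using that c aut_commutator_fixes_abelian_generator[OF \<beta> Kn(1,3,4) \<rho>1(1) \<tau>1(1)]
    unfolding aut_def c_def by auto
  moreover have "gen_subfield (F \<union> {\<beta>}) \<subseteq> Kn" using Kn by (intro gen_subfield_least) auto
  ultimately have "c z = id z" if "z \<in> gen_subfield (F \<union> {\<beta>})" for z
    using hom_eq_on_gen_subfield[OF Kn(1) _ hom_on_id _ _ that] c unfolding aut_def by blast
  then have "aut Kn (gen_subfield (F \<union> {\<beta>})) c" using c unfolding aut_def by simp
  then show ?thesis using eq unfolding restr_auts_def Kn_def by blast
qed

lemma abelian_generator_radical_tower_step:
  assumes N: "N > 0" and zs: "radical_tower N zs" and n: "n < length (root_unity N # zs)"
  shows "abelian_generator (gen_subfield (set (take n (root_unity N # zs)))) ((root_unity N # zs) ! n)"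
proof (cases n)
  case 0
  then show ?thesis using abelian_generator_root_unity[OF csubfield_gen_subfield N] by simp
next
  case (Suc j)
  let ?F = "gen_subfield (set (take n (root_unity N # zs)))"
  obtain k where k: "k \<ge> 1" "k dvd N" "(zs ! j) ^ k \<in> gen_subfield (set (take j zs))"
    using zs n Suc unfolding radical_tower_def by auto
  have "root_unity N \<in> ?F" using Suc by (simp add: gen_subfield.gen)
  moreover have "gen_subfield (set (take j zs)) \<subseteq> ?F"
    using Suc by (intro gen_subfield_mono) auto
  ultimately show ?thesis
    using abelian_generator_kummer[OF N csubfield_gen_subfield _ k(1,2)] k(3) Suc by auto
qed

theorem solvable_Gal_if_in_radical_tower:
  assumes K: "normal_subfield K" "csubfield K"
    and N: "N > 0" "radical_tower N zs" and KL: "K \<subseteq> gen_subfield (set zs)"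
  shows "solvable (Gal K)"
proof -
  interpret group "Gal K" by (rule Gal_group[OF K(2)])
  define bs where "bs = root_unity N # zs"
  define Fs where "Fs n = gen_subfield (set (take n bs))" for n
  define Ks where "Ks n = gen_subfield (K \<union> set (take n bs))" for n
  have Ks: "csubfield (Ks n)" "K \<subseteq> Ks n" "Fs n \<subseteq> Ks n" for n
    unfolding Ks_def Fs_def using csubfield_gen_subfield gen_subfield_subset
    by (blast, blast, intro gen_subfield_mono Un_upper2)
  have Suc_eq: "Ks (Suc n) = gen_subfield (Ks n \<union> {bs ! n})" "Fs (Suc n) = gen_subfield (Fs n \<union> {bs ! n})"
    if "n < length bs" for n
  proof -
    have take: "take (Suc n) bs = take n bs @ [bs ! n]" using that by (rule take_Suc_conv_app_nth)
    show "Ks (Suc n) = gen_subfield (Ks n \<union> {bs ! n})"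
      unfolding Ks_def take gen_subfield_Un_gen_subfield by (simp add: Un_assoc)
    show "Fs (Suc n) = gen_subfield (Fs n \<union> {bs ! n})"
      unfolding Fs_def take gen_subfield_Un_gen_subfield by (simp add: Un_commute)
  qed
  show ?thesis
  proof (rule solvable_if_commutator_chain)
    show "subgroup (restr_auts K (Ks n) (Fs n)) (Gal K)" for n
      by (rule subgroup_restr_auts[OF K Ks])
    show "carrier (Gal K) \<subseteq> restr_auts K (Ks 0) (Fs 0)"
      using carrier_Gal_subset_restr_auts[OF K(2)] gen_subfield_idem[OF K(2)]
      by (simp add: Ks_def Fs_def)
    show "x \<otimes>\<^bsub>Gal K\<^esub> y \<otimes>\<^bsub>Gal K\<^esub> inv\<^bsub>Gal K\<^esub> x \<otimes>\<^bsub>Gal K\<^esub> inv\<^bsub>Gal K\<^esub> y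
        \<in> restr_auts K (Ks (Suc n)) (Fs (Suc n))"
      if n: "n < length bs" and xy: "x \<in> restr_auts K (Ks n) (Fs n)" "y \<in> restr_auts K (Ks n) (Fs n)"
      for n x y
    proof -
      have \<beta>: "abelian_generator (Fs n) (bs ! n)"
        using abelian_generator_radical_tower_step[OF N] n unfolding Fs_def bs_def by blast
      show ?thesis using commutator_restr_auts_adjoin[OF K Ks \<beta> xy] unfolding Suc_eq[OF n] .
    qed
    have "K \<subseteq> Fs (length bs)"
      using KL gen_subfield_mono[of "set zs" "set bs"] unfolding Fs_def bs_def by auto
    then show "restr_auts K (Ks (length bs)) (Fs (length bs)) \<subseteq> {\<one>\<^bsub>Gal K\<^esub>}"
      by (rule restr_auts_trivial)
  qed
qed

lemma solvable_Gal_splitting_field: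
  assumes "radical_computable \<alpha>" "irreducible p" "poly (map_poly of_rat p) \<alpha> = 0"
  shows "solvable (Gal (splitting_field p))"
proof -
  obtain N zs where N: "N > 0" "radical_tower N zs"
    and roots: "{z. poly (map_poly of_rat p) z = 0} \<subseteq> gen_subfield (set zs)"
    using roots_in_radical_tower[OF assms] .
  have "p \<noteq> 0" using assms(2) by auto
  moreover have "splitting_field p \<subseteq> gen_subfield (set zs)"
    using roots unfolding splitting_field_def by (intro gen_subfield_least csubfield_gen_subfield)
  ultimately show ?thesis
    using solvable_Gal_if_in_radical_tower[OF normal_subfield_splitting_field _ N]
    unfolding splitting_field_def by (simp add: csubfield_gen_subfield)
qed

lemma solvable_if_iso_subgroup:
  assumes G': "group G'" and G: "group G" "solvable G" and H: "subgroup H G"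
    and iso: "G' \<cong> G\<lparr>carrier := H\<rparr>"
  shows "solvable G'"
proof -
  obtain h where h: "h \<in> iso G' (G\<lparr>carrier := H\<rparr>)" using iso unfolding is_iso_def by blast
  then have "h \<in> hom G' G" using subgroup.subset[OF H] unfolding iso_def hom_def by auto
  then have "group_hom G' G h" using G' G(1) by (simp add: group_hom_def group_hom_axioms_def)
  moreover have "inj_on h (carrier G')" using h unfolding iso_def bij_betw_def by auto
  ultimately show ?thesis using group_hom.inj_hom_imp_solvable G(2) by blast
qed

theorem lemma7:
  fixes \<alpha> :: complex and p :: "rat poly" and n :: nat
  assumes "radical_computable \<alpha>"
    and "irreducible p"
    and "poly (map_poly of_rat p) \<alpha> = 0"
    and "n \<ge> 5"
  shows "\<not> (\<exists>H. subgroup H (Gal (splitting_field p))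
              \<and> sym_group n \<cong> (Gal (splitting_field p))\<lparr>carrier := H\<rparr>)"
proof
  assume "\<exists>H. subgroup H (Gal (splitting_field p))
              \<and> sym_group n \<cong> (Gal (splitting_field p))\<lparr>carrier := H\<rparr>"
  then obtain H where "subgroup H (Gal (splitting_field p))"
    and "sym_group n \<cong> (Gal (splitting_field p))\<lparr>carrier := H\<rparr>" by blast
  moreover have "group (Gal (splitting_field p))"
    unfolding splitting_field_def by (rule Gal_group[OF csubfield_gen_subfield])
  ultimately have "solvable (sym_group n)"
    using solvable_if_iso_subgroup[OF sym_group_is_group] solvable_Gal_splitting_field[OF assms(1-3)]
    by blast
  then show False using sym_group_is_unsolvable[OF assms(4)] by blast
qed

end
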